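(* Let $n$ be even, $k=k_U+k_V$, and let $\mathbf{H}_{\textup{pk}}=\mathbf{S}\,\mathbf{H}_{\textup{sk}}\,\mathbf{P}$ be a public parity-check matrix of a permuted normalized generalized $(U,U+V)$-code over $\mathbb{F}_3$, as described in the context, with $n_I$ blocks of type I. For a matrix $\mathbf{H}\in\mathbb{F}_3^{(n-k)\times n}$, let $\mathcal{D}_w^{\mathbf{H}}$ be the distribution of $\mathbf{e}\,\mathbf{H}^{\intercal}$ when $\mathbf{e}$ is drawn uniformly at random among $S_w$ (the words of Hamming weight $w$ in $\mathbb{F}_3^n$), and let $\mathcal{U}$ be the uniform distribution over $\mathbb{F}_3^{n-k}$. We have \[ \mathbb{E}_{\mathbf{H}_{\textup{pk}}}\left(\rho(\mathcal{D}_w^{\mathbf{H}_{\textup{pk}}},\mathcal{U})\right)\le\frac12\sqrt{\varepsilon} \] with \[ \varepsilon=\frac{3^{n-k}}{2^{w}\binom{n}{w}}+3^{n/2-k_V}\sum_{j=0}^{n/2}\frac{q_1(j)^2}{2^{j}\binom{n/2}{j}}+3^{n/2-k_U}\sum_{j=0}^{n_I}\frac{\binom{n_I}{j}\binom{n-n_I}{w-j}^2}{\binom{n}{w}^2\,2^{j}}, \] where for $0\le i\le n/2$, \[ q_1(i)=\frac{\binom{n/2}{i}}{\binom{n}{w}2^{w/2}}\sum_{\substack{p=0\\ w+p\equiv 0 \bmod 2}}^{i}\binom{i}{p}\binom{n/2-i}{(w+p)/2-i}2^{3p/2}. \]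
   Context: Setting: $\mathbf{a},\mathbf{b},\mathbf{c},\mathbf{d}\in\mathbb{F}_3^{n/2}$ satisfy $a_id_i-b_ic_i=1$ and $a_ic_i\neq0$ for all $i$ (a UV-normalized mapping). With $\mathbf{A}=\mathbf{Diag}(\mathbf{a})$, $\mathbf{B}=\mathbf{Diag}(\mathbf{b})$, $\mathbf{C}=\mathbf{Diag}(\mathbf{c})$, $\mathbf{D}=\mathbf{Diag}(\mathbf{d})$, the secret parity-check matrix is $\mathbf{H}_{\textup{sk}}=\begin{pmatrix}\mathbf{H}_U\mathbf{D} & -\mathbf{H}_U\mathbf{B}\\ -\mathbf{H}_V\mathbf{C} & \mathbf{H}_V\mathbf{A}\end{pmatrix}$, where $\mathbf{H}_U$ is uniform in $\mathbb{F}_3^{(n/2-k_U)\times n/2}$, $\mathbf{H}_V$ uniform in $\mathbb{F}_3^{(n/2-k_V)\times n/2}$, $\mathbf{S}$ uniform among invertible $(n-k)\times(n-k)$ ternary matrices, and $\mathbf{P}$ a uniform $n\times n$ permutation matrix; the expectation is over this random choice of $\mathbf{H}_{\textup{pk}}$. The number of $V$ blocks of type I is $n_I=|\{1\le i\le n/2: b_id_i=0\}|$. The statistical distance is $\rho(\mathcal{D}_0,\mathcal{D}_1)=\frac12\sum_x|\mathcal{D}_0(x)-\mathcal{D}_1(x)|$. The quantity $q_1(i)$ equals $\mathbb{P}(|\mathbf{e}_V|=i)$ where $\mathbf{e}=(\mathbf{e}_1,\mathbf{e}_2)$ is uniform over words of weight $w$ in $\mathbb{F}_3^n$ and $\mathbf{e}_V=-\mathbf{c}\odot\mathbf{e}_1+\mathbf{a}\odot\mathbf{e}_2$.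 *)

theory Defs
  imports "HOL-Combinatorics.Permutations" Complex_Main
begin

text \<open>Elements of F_3 are represented by the integers 0,1,2; arithmetic is done mod 3.
  Vectors of length m are functions nat \<Rightarrow> int, with entries in {0,1,2} at indices < m
  and 0 elsewhere; an r x c matrix is a function nat \<Rightarrow> nat \<Rightarrow> int similarly.\<close>

definition F3vecs :: "nat \<Rightarrow> (nat \<Rightarrow> int) set" where
  "F3vecs m = {v. (\<forall>i. i < m \<longrightarrow> v i \<in> {0,1,2}) \<and> (\<forall>i. m \<le> i \<longrightarrow> v i = 0)}"

definition F3mats :: "nat \<Rightarrow> nat \<Rightarrow> (nat \<Rightarrow> nat \<Rightarrow> int) set" where
  "F3mats r c = {M. \<forall>i j. (i < r \<and> j < c \<longrightarrow> M i j \<in> {0,1,2})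
                        \<and> (\<not> (i < r \<and> j < c) \<longrightarrow> M i j = 0)}"

definition mmul :: "nat \<Rightarrow> nat \<Rightarrow> nat \<Rightarrow> (nat \<Rightarrow> nat \<Rightarrow> int) \<Rightarrow> (nat \<Rightarrow> nat \<Rightarrow> int)
                     \<Rightarrow> nat \<Rightarrow> nat \<Rightarrow> int" where
  "mmul r l c A B = (\<lambda>i j. if i < r \<and> j < c then (\<Sum>t<l. A i t * B t j) mod 3 else 0)"

definition idmat :: "nat \<Rightarrow> nat \<Rightarrow> nat \<Rightarrow> int" where
  "idmat m = (\<lambda>i j. if i < m \<and> j < m \<and> i = j then 1 else 0)"

definition F3invertible :: "nat \<Rightarrow> (nat \<Rightarrow> nat \<Rightarrow> int) set" where
  "F3invertible m = {S \<in> F3mats m m. \<exists>T \<in> F3mats m m.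
       mmul m m m S T = idmat m \<and> mmul m m m T S = idmat m}"

definition perm_mat :: "nat \<Rightarrow> (nat \<Rightarrow> nat) \<Rightarrow> nat \<Rightarrow> nat \<Rightarrow> int" where
  "perm_mat n \<pi> = (\<lambda>i j. if i < n \<and> j < n \<and> \<pi> i = j then 1 else 0)"

definition hweight :: "nat \<Rightarrow> (nat \<Rightarrow> int) \<Rightarrow> nat" where
  "hweight n e = card {i. i < n \<and> e i \<noteq> 0}"

definition sphere :: "nat \<Rightarrow> nat \<Rightarrow> (nat \<Rightarrow> int) set" where
  "sphere n w = {e \<in> F3vecs n. hweight n e = w}"

definition syndrome :: "nat \<Rightarrow> nat \<Rightarrow> (nat \<Rightarrow> nat \<Rightarrow> int) \<Rightarrow> (nat \<Rightarrow> int) \<Rightarrow> nat \<Rightarrow> int" where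
  "syndrome r n H e = (\<lambda>i. if i < r then (\<Sum>j<n. H i j * e j) mod 3 else 0)"

definition syn_dist :: "nat \<Rightarrow> nat \<Rightarrow> nat \<Rightarrow> (nat \<Rightarrow> nat \<Rightarrow> int) \<Rightarrow> (nat \<Rightarrow> int) \<Rightarrow> real" where
  "syn_dist r n w H s = real (card {e \<in> sphere n w. syndrome r n H e = s}) / real (card (sphere n w))"

definition dist_to_unif :: "nat \<Rightarrow> nat \<Rightarrow> nat \<Rightarrow> (nat \<Rightarrow> nat \<Rightarrow> int) \<Rightarrow> real" where
  "dist_to_unif r n w H = 1/2 * (\<Sum>s \<in> F3vecs r. \<bar>syn_dist r n w H s - 1 / 3 ^ r\<bar>)"

text \<open>Secret parity-check matrix, m = n/2:
  [ H_U D   , -H_U B ]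
  [ -H_V C  ,  H_V A ]\<close>
definition Hsk :: "nat \<Rightarrow> nat \<Rightarrow> nat \<Rightarrow> (nat \<Rightarrow> int) \<Rightarrow> (nat \<Rightarrow> int) \<Rightarrow> (nat \<Rightarrow> int) \<Rightarrow> (nat \<Rightarrow> int)
                  \<Rightarrow> (nat \<Rightarrow> nat \<Rightarrow> int) \<Rightarrow> (nat \<Rightarrow> nat \<Rightarrow> int) \<Rightarrow> nat \<Rightarrow> nat \<Rightarrow> int" where
  "Hsk m kU kV a b c d HU HV = (\<lambda>i j.
     if i < m - kU \<and> j < 2*m then
       (if j < m then HU i j * d j else - HU i (j - m) * b (j - m)) mod 3
     else if m - kU \<le> i \<and> i < (m - kU) + (m - kV) \<and> j < 2*m then
       (if j < m then - HV (i - (m - kU)) j * c j else HV (i - (m - kU)) (j - m) * a (j - m)) mod 3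
     else 0)"

text \<open>Public parity-check matrix H_pk = S H_sk P with n = 2m, n - k = (m-kU)+(m-kV).\<close>
definition Hpk :: "nat \<Rightarrow> nat \<Rightarrow> nat \<Rightarrow> (nat \<Rightarrow> int) \<Rightarrow> (nat \<Rightarrow> int) \<Rightarrow> (nat \<Rightarrow> int) \<Rightarrow> (nat \<Rightarrow> int)
                  \<Rightarrow> (nat \<Rightarrow> nat \<Rightarrow> int) \<Rightarrow> (nat \<Rightarrow> nat \<Rightarrow> int) \<Rightarrow> (nat \<Rightarrow> nat \<Rightarrow> int) \<Rightarrow> (nat \<Rightarrow> nat)
                  \<Rightarrow> nat \<Rightarrow> nat \<Rightarrow> int" where
  "Hpk m kU kV a b c d HU HV S \<pi> =
     (let r = (m - kU) + (m - kV) in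
      mmul r r (2*m) S (mmul r (2*m) (2*m) (Hsk m kU kV a b c d HU HV) (perm_mat (2*m) \<pi>)))"

definition nI :: "nat \<Rightarrow> (nat \<Rightarrow> int) \<Rightarrow> (nat \<Rightarrow> int) \<Rightarrow> nat" where
  "nI m b d = card {i. i < m \<and> (b i * d i) mod 3 = 0}"

text \<open>q_1(i), as given by the explicit formula (binomial with negative lower index = 0).\<close>
definition q1 :: "nat \<Rightarrow> nat \<Rightarrow> nat \<Rightarrow> real" where
  "q1 n w i = real ((n div 2) choose i) / (real (n choose w) * 2 powr (real w / 2)) *
     (\<Sum>p \<in> {p. p \<le> i \<and> even (w + p)}.
        real (i choose p) *
        (if i \<le> (w + p) div 2 then real ((n div 2 - i) choose ((w + p) div 2 - i)) else 0) *
        2 powr (3 * real p / 2))"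

definition eps :: "nat \<Rightarrow> nat \<Rightarrow> nat \<Rightarrow> nat \<Rightarrow> nat \<Rightarrow> real" where
  "eps n kU kV w nI0 =
     3 ^ (n - (kU + kV)) / (2 ^ w * real (n choose w))
   + 3 ^ (n div 2 - kV) * (\<Sum>j=0..n div 2. (q1 n w j)^2 / (2 ^ j * real ((n div 2) choose j)))
   + 3 ^ (n div 2 - kU) * (\<Sum>j=0..nI0.
        real (nI0 choose j) * (if j \<le> w then real ((n - nI0) choose (w - j)) else 0)^2
        / (real (n choose w) ^ 2 * 2 ^ j))"

end

theory Submission
  imports Defs "HOL-Computational_Algebra.Polynomial" "HOL-Analysis.Convex"
begin

text \<open>Multiplying \<open>H\<^sub>s\<^sub>k\<close> on the left by an invertible matrix and on the right by a
  permutation matrix does not change the distance of the syndrome distribution to the uniform one,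
  so only the average over \<open>H\<^sub>U\<close> and \<open>H\<^sub>V\<close> has to be bounded. By Cauchy-Schwarz,
  twice this distance is at most \<open>\<surd>(3\<^sup>n\<^sup>-\<^sup>k \<Sum> D\<^sup>2 - 1)\<close>, where \<open>\<Sum> D\<^sup>2\<close> is
  the probability that two independent words of weight \<open>w\<close> collide, and by concavity of the square
  root the average over the key may be taken inside.

  Two words \<open>e, e'\<close> collide iff \<open>H\<^sub>U\<close> annihilates \<open>e\<^sub>U - e'\<^sub>U\<close> and \<open>H\<^sub>V\<close>
  annihilates \<open>e\<^sub>V - e'\<^sub>V\<close>. For a uniform \<open>H\<^sub>U\<close> this happens with probability 1 if
  \<open>e\<^sub>U = e'\<^sub>U\<close> and \<open>3\<^sup>-\<^sup>(\<^sup>n\<^sup>/\<^sup>2\<^sup>-\<^sup>k\<^sup>U\<^sup>)\<close> otherwise, and \<open>e\<^sub>U = e'\<^sub>U\<close>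
  together with \<open>e\<^sub>V = e'\<^sub>V\<close> forces \<open>e = e'\<close>. The expected collision count is thus bounded
  by the diagonal, a uniform term, and the numbers of pairs with \<open>e\<^sub>V = e'\<^sub>V\<close> and with
  \<open>e\<^sub>U = e'\<^sub>U\<close>. The former is computed exactly from the weight enumerator of the fibres
  of \<open>e \<mapsto> e\<^sub>V\<close>, which gives the \<open>q\<^sub>1\<close> sum; the latter is bounded by the number of pairs
  agreeing on the \<open>n\<^sub>I\<close> coordinates that \<open>e\<^sub>U\<close> determines on the blocks of type I.\<close>

section \<open>Counting functions by weight\<close>

definition PiE_dflt :: "'a set \<Rightarrow> 'b \<Rightarrow> ('a \<Rightarrow> 'b set) \<Rightarrow> ('a \<Rightarrow> 'b) set" where
  "PiE_dflt A dflt B = {f. (\<forall>x\<in>A. f x \<in> B x) \<and> (\<forall>x. x \<notin> A \<longrightarrow> f x = dflt)}"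

lemma bij_betw_restrict_PiE_dflt: "bij_betw (\<lambda>f. restrict f A) (PiE_dflt A dflt B) (PiE A B)"
  by (rule bij_betw_byWitness[where f'="\<lambda>f x. if x \<in> A then f x else dflt"])
     (auto simp: PiE_dflt_def restrict_def PiE_def extensional_def fun_eq_iff)

lemma card_PiE_dflt: "finite A \<Longrightarrow> card (PiE_dflt A dflt B) = (\<Prod>x\<in>A. card (B x))"
  using bij_betw_same_card[OF bij_betw_restrict_PiE_dflt] card_PiE by metis

lemma finite_PiE_dflt:
  "finite A \<Longrightarrow> (\<And>x. x \<in> A \<Longrightarrow> finite (B x)) \<Longrightarrow> finite (PiE_dflt A dflt B)"
  using bij_betw_finite[OF bij_betw_restrict_PiE_dflt] finite_PiE by metis

lemma card_PiE_dflt_weight_insert_fibre: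
  fixes \<omega> :: "'b \<Rightarrow> nat"
  assumes "finite A" "a \<notin> A" "y \<in> B a"
  shows "card {f \<in> PiE_dflt (insert a A) dflt B. (\<Sum>x\<in>insert a A. \<omega> (f x)) = k \<and> f a = y}
         = (if k < \<omega> y then 0 else card {f \<in> PiE_dflt A dflt B. (\<Sum>x\<in>A. \<omega> (f x)) = k - \<omega> y})"
proof (cases "k < \<omega> y")
  case False
  have sum_upd: "(\<Sum>x\<in>A. \<omega> (if x = a then z else f x)) = (\<Sum>x\<in>A. \<omega> (f x))" for f z
    using assms(2) by (intro sum.cong) auto
  have "bij_betw (\<lambda>f. f(a := y)) {f \<in> PiE_dflt A dflt B. (\<Sum>x\<in>A. \<omega> (f x)) = k - \<omega> y}
          {f \<in> PiE_dflt (insert a A) dflt B. (\<Sum>x\<in>insert a A. \<omega> (f x)) = k \<and> f a = y}"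
    by (rule bij_betw_byWitness[where f'="\<lambda>f. f(a := dflt)"])
       (use assms False in \<open>auto simp: PiE_dflt_def sum_upd fun_eq_iff not_less\<close>)
  then show ?thesis
    using False by (simp add: bij_betw_same_card)
next
  case True
  then have empty: "{f \<in> PiE_dflt (insert a A) dflt B. (\<Sum>x\<in>insert a A. \<omega> (f x)) = k \<and> f a = y} = {}"
    using assms(1,2) by fastforce
  show ?thesis
    unfolding empty using True by simp
qed

lemma card_PiE_dflt_weight:
  assumes "finite A" "\<And>x. x \<in> A \<Longrightarrow> finite (B x)"
  shows "card {f \<in> PiE_dflt A dflt B. (\<Sum>x\<in>A. \<omega> (f x)) = k}
         = coeff (\<Prod>x\<in>A. \<Sum>y\<in>B x. monom (1::nat) (\<omega> y)) k"
  using assms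
proof (induction A arbitrary: k rule: finite_induct)
  case empty
  have "PiE_dflt {} dflt B = {\<lambda>_. dflt}"
    by (auto simp: PiE_dflt_def)
  then show ?case
    by (auto simp: coeff_1)
next
  case (insert a A)
  let ?T = "{f \<in> PiE_dflt (insert a A) dflt B. (\<Sum>x\<in>insert a A. \<omega> (f x)) = k}"
  let ?Q = "\<Prod>x\<in>A. \<Sum>y\<in>B x. monom (1::nat) (\<omega> y)"
  have "finite ?T"
    using finite_PiE_dflt[of "insert a A" B dflt] insert by auto
  then have "(\<Sum>y\<in>B a. \<Sum>f\<in>{f \<in> ?T. f a = y}. 1::nat) = (\<Sum>f\<in>?T. 1)"
    using insert.prems by (intro sum.group) (auto simp: PiE_dflt_def)
  then have "card ?T = (\<Sum>y\<in>B a. card {f \<in> ?T. f a = y})"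
    by simp
  also have "\<dots> = (\<Sum>y\<in>B a. coeff (monom 1 (\<omega> y) * ?Q) k)"
  proof (rule sum.cong[OF refl])
    fix y assume "y \<in> B a"
    have fibre: "{f \<in> ?T. f a = y}
        = {f \<in> PiE_dflt (insert a A) dflt B. (\<Sum>x\<in>insert a A. \<omega> (f x)) = k \<and> f a = y}"
      by auto
    show "card {f \<in> ?T. f a = y} = coeff (monom 1 (\<omega> y) * ?Q) k"
      unfolding fibre card_PiE_dflt_weight_insert_fibre[where B=B, OF insert.hyps \<open>y \<in> B a\<close>] coeff_monom_mult
      using insert.IH insert.prems by simp
  qed
  also have "\<dots> = coeff (\<Prod>x\<in>insert a A. \<Sum>y\<in>B x. monom (1::nat) (\<omega> y)) k"
    using insert.hyps by (simp add: sum_distrib_right coeff_sum)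
  finally show ?case .
qed

lemma ternary_weight_enum: "(\<Sum>y\<in>{0,1,2::int}. monom (1::nat) (of_bool (y \<noteq> 0))) = [:1, 2:]"
  by (simp add: monom_altdef numeral_2_eq_2)

lemma coeff_ternary_weight_enum_power: "coeff ([:1, 2:] ^ n) k = (n choose k) * (2::nat) ^ k"
proof (cases "k \<le> n")
  case False
  then show ?thesis
    using degree_power_le[of "[:1, 2::nat:]" n] by (simp add: coeff_eq_0)
qed (simp add: coeff_linear_poly_power)

lemma prod_monom_1: "finite I \<Longrightarrow> (\<Prod>i\<in>I. monom (1::'a::comm_semiring_1) (f i)) = monom 1 (\<Sum>i\<in>I. f i)"
  by (induction I rule: finite_induct) (simp_all add: mult_monom monom_0 one_pCons)

lemma card_ternary_PiE_dflt_weight: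
  assumes "finite A"
  shows "card {v \<in> PiE_dflt A 0 (\<lambda>_. {0,1,2::int}). (\<Sum>x\<in>A. of_bool (v x \<noteq> 0)) = k}
         = (card A choose k) * 2 ^ k"
proof -
  have "card {v \<in> PiE_dflt A 0 (\<lambda>_. {0,1,2::int}). (\<Sum>x\<in>A. of_bool (v x \<noteq> 0)) = k}
        = coeff (\<Prod>x\<in>A. \<Sum>y\<in>{0,1,2::int}. monom (1::nat) (of_bool (y \<noteq> 0))) k"
    by (rule card_PiE_dflt_weight) (use assms in auto)
  then show ?thesis
    by (simp only: ternary_weight_enum prod_constant coeff_ternary_weight_enum_power)
qed

lemma sum_ternary_PiE_dflt_by_weight:
  assumes "finite A"
  shows "(\<Sum>v\<in>PiE_dflt A 0 (\<lambda>_. {0,1,2::int}). f (\<Sum>x\<in>A. of_bool (v x \<noteq> 0) :: nat))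
         = (\<Sum>k\<le>card A. of_nat ((card A choose k) * 2 ^ k) * f k)"
proof -
  let ?V = "PiE_dflt A 0 (\<lambda>_. {0,1,2::int})" and ?wt = "\<lambda>v. \<Sum>x\<in>A. of_bool (v x \<noteq> 0) :: nat"
  have "?wt v \<le> card A" for v
    using sum_mono[of A "\<lambda>x. of_bool (v x \<noteq> 0)" "\<lambda>_. 1::nat"] by simp
  then have "(\<Sum>v\<in>?V. f (?wt v)) = (\<Sum>k\<le>card A. \<Sum>v\<in>{v \<in> ?V. ?wt v = k}. f (?wt v))"
    using assms by (intro sum.group[symmetric]) (auto intro: finite_PiE_dflt)
  also have "\<dots> = (\<Sum>k\<le>card A. of_nat ((card A choose k) * 2 ^ k) * f k)"
    by (simp add: card_ternary_PiE_dflt_weight[OF assms])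
  finally show ?thesis .
qed

lemma card_pairs_same_image:
  assumes "finite A" "finite V" "g ` A \<subseteq> V"
  shows "card {p \<in> A \<times> A. g (fst p) = g (snd p)} = (\<Sum>v\<in>V. card {x \<in> A. g x = v} ^ 2)"
proof -
  have pairs: "{p \<in> A \<times> A. g (fst p) = g (snd p)} = (\<Union>v\<in>V. {x \<in> A. g x = v} \<times> {x \<in> A. g x = v})"
    using assms(3) by auto
  show ?thesis
    unfolding pairs using assms(1,2)
    by (subst card_UN_disjoint) (auto simp: card_cartesian_product power2_eq_square)
qed

section \<open>Two consequences of the Cauchy-Schwarz inequality\<close>

lemma average_sqrt_le_sqrt_average:
  fixes X :: "'a \<Rightarrow> real"
  assumes "finite I" "\<And>i. i \<in> I \<Longrightarrow> 0 \<le> X i"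
  shows "(\<Sum>i\<in>I. sqrt (X i)) / card I \<le> sqrt ((\<Sum>i\<in>I. X i) / card I)"
proof -
  have "(\<Sum>i\<in>I. sqrt (X i) * 1)\<^sup>2 \<le> (\<Sum>i\<in>I. (sqrt (X i))\<^sup>2) * (\<Sum>i\<in>I. 1\<^sup>2)"
    by (rule Cauchy_Schwarz_ineq_sum)
  also have "\<dots> = (\<Sum>i\<in>I. X i) * card I"
    using assms(2) by simp
  finally have "(\<Sum>i\<in>I. sqrt (X i)) / card I \<le> sqrt ((\<Sum>i\<in>I. X i) * card I) / card I"
    by (intro divide_right_mono real_le_rsqrt) auto
  also have "\<dots> = sqrt ((\<Sum>i\<in>I. X i) / card I)"
    by (cases "card I = 0") (simp_all add: real_sqrt_mult real_sqrt_divide field_simps)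
  finally show ?thesis .
qed

lemma sum_abs_diff_uniform_le:
  fixes D :: "'a \<Rightarrow> real"
  assumes "finite V" "(\<Sum>s\<in>V. D s) = 1"
  shows "(\<Sum>s\<in>V. \<bar>D s - 1 / card V\<bar>)\<^sup>2 \<le> card V * (\<Sum>s\<in>V. (D s)\<^sup>2) - 1"
proof (cases "V = {}")
  case False
  let ?c = "1 / real (card V)"
  have "(\<Sum>s\<in>V. \<bar>D s - ?c\<bar> * 1)\<^sup>2 \<le> (\<Sum>s\<in>V. \<bar>D s - ?c\<bar>\<^sup>2) * (\<Sum>s\<in>V. 1\<^sup>2)"
    by (rule Cauchy_Schwarz_ineq_sum)
  also have "(\<Sum>s\<in>V. \<bar>D s - ?c\<bar>\<^sup>2) = (\<Sum>s\<in>V. (D s)\<^sup>2) - 2 * ?c * (\<Sum>s\<in>V. D s) + card V * ?c\<^sup>2"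
    by (simp add: power2_diff sum.distrib sum_subtractf sum_distrib_left)
  also have "\<dots> * (\<Sum>s\<in>V. 1\<^sup>2) = card V * (\<Sum>s\<in>V. (D s)\<^sup>2) - 1"
    using assms False by (simp add: power2_eq_square field_simps)
  finally show ?thesis by simp
qed (use assms in simp)

section \<open>Ternary vectors, words of fixed weight and syndromes\<close>

lemma mod_3_cases: "(x::int) mod 3 \<in> {0,1,2}"
  by (auto simp: mod_pos_pos_trivial)

lemma F3_eq_if_dvd_diff: "(x::int) \<in> {0,1,2} \<Longrightarrow> y \<in> {0,1,2} \<Longrightarrow> 3 dvd (x - y) \<Longrightarrow> x = y"
  by auto

lemma dvd_mult_cancel_3: "\<not> (3::int) dvd x \<Longrightarrow> 3 dvd x * y \<Longrightarrow> 3 dvd y"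
  using prime_dvd_mult_iff[of "3::int" x y] by simp

lemma sum_mod_mult_left_eq:
  "(\<Sum>j\<in>A. (f j mod m) * g j) mod m = (\<Sum>j\<in>A. f j * g j) mod (m::int)"
proof -
  have "(\<Sum>j\<in>A. (f j mod m) * g j) mod m = (\<Sum>j\<in>A. ((f j mod m) * g j) mod m) mod m"
    by (simp add: mod_sum_eq)
  also have "\<dots> = (\<Sum>j\<in>A. (f j * g j) mod m) mod m"
    by (simp add: mod_mult_left_eq)
  also have "\<dots> = (\<Sum>j\<in>A. f j * g j) mod m"
    by (simp add: mod_sum_eq)
  finally show ?thesis .
qed

lemma mod_sum_mult_assoc:
  "(\<Sum>j\<in>J. ((\<Sum>t\<in>T. x t * M t j) mod m) * y j) mod m
   = (\<Sum>t\<in>T. x t * ((\<Sum>j\<in>J. M t j * y j) mod m)) mod (m::int)"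
proof -
  have "(\<Sum>j\<in>J. (\<Sum>t\<in>T. x t * M t j) * y j) = (\<Sum>t\<in>T. x t * (\<Sum>j\<in>J. M t j * y j))"
    by (simp add: sum_distrib_left sum_distrib_right mult.assoc) (rule sum.swap)
  then show ?thesis
    using sum_mod_mult_left_eq[of "\<lambda>j. \<Sum>t\<in>T. x t * M t j" m y J]
      sum_mod_mult_left_eq[of "\<lambda>t. \<Sum>j\<in>J. M t j * y j" m x T]
    by (simp add: mult.commute)
qed

lemma F3vecs_eq_PiE_dflt: "F3vecs n = PiE_dflt {..<n} 0 (\<lambda>_. {0,1,2})"
  by (auto simp: F3vecs_def PiE_dflt_def not_less)

lemma finite_F3vecs: "finite (F3vecs n)"
  unfolding F3vecs_eq_PiE_dflt by (rule finite_PiE_dflt) auto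

lemma card_F3vecs: "card (F3vecs n) = 3 ^ n"
  unfolding F3vecs_eq_PiE_dflt by (simp add: card_PiE_dflt numeral_3_eq_3)

lemma hweight_eq_sum: "hweight n e = (\<Sum>i<n. of_bool (e i \<noteq> 0))"
  by (simp add: hweight_def Int_def lessThan_def)

lemma sphere_eq_PiE_dflt:
  "sphere n w = {e \<in> PiE_dflt {..<n} 0 (\<lambda>_. {0,1,2}). (\<Sum>i<n. of_bool (e i \<noteq> 0)) = w}"
  by (simp add: sphere_def F3vecs_eq_PiE_dflt hweight_eq_sum)

lemma card_sphere: "card (sphere n w) = (n choose w) * 2 ^ w"
  unfolding sphere_eq_PiE_dflt using card_ternary_PiE_dflt_weight[of "{..<n}" w] by simp

lemma finite_sphere: "finite (sphere n w)"
  unfolding sphere_def using finite_F3vecs by simp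

lemma F3vecs_eq_if_dvd_diff:
  assumes "e \<in> F3vecs n" "e' \<in> F3vecs n" "\<And>i. i < n \<Longrightarrow> (3::int) dvd (e i - e' i)"
  shows "e = e'"
proof
  fix i
  show "e i = e' i"
  proof (cases "i < n")
    case True
    then show ?thesis
      using assms by (intro F3_eq_if_dvd_diff) (auto simp: F3vecs_def)
  qed (use assms in \<open>simp add: F3vecs_def\<close>)
qed

lemma syndrome_in_F3vecs: "syndrome r n H e \<in> F3vecs r"
  using mod_3_cases by (auto simp: syndrome_def F3vecs_def)

section \<open>Invariance under \<open>S\<close> and \<open>P\<close>\<close>

definition mat_vec :: "nat \<Rightarrow> (nat \<Rightarrow> nat \<Rightarrow> int) \<Rightarrow> (nat \<Rightarrow> int) \<Rightarrow> nat \<Rightarrow> int" where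
  "mat_vec r S s = (\<lambda>i. if i < r then (\<Sum>t<r. S i t * s t) mod 3 else 0)"

lemma mat_vec_in_F3vecs: "mat_vec r S s \<in> F3vecs r"
  using mod_3_cases by (auto simp: mat_vec_def F3vecs_def)

lemma syndrome_mmul: "syndrome r n (mmul r r n S M) e = mat_vec r S (syndrome r n M e)"
  by (rule ext) (simp add: syndrome_def mmul_def mat_vec_def mod_sum_mult_assoc)

lemma mat_vec_mmul: "mat_vec r T (mat_vec r S s) = mat_vec r (mmul r r r T S) s"
  by (rule ext) (simp add: mmul_def mat_vec_def mod_sum_mult_assoc)

lemma mat_vec_idmat: "s \<in> F3vecs r \<Longrightarrow> mat_vec r (idmat r) s = s"
  by (rule ext) (auto simp: mat_vec_def idmat_def F3vecs_def if_distrib[of "\<lambda>x. x * _"] cong: if_cong)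

lemma idmat_in_F3invertible: "idmat r \<in> F3invertible r"
proof -
  have "mmul r r r (idmat r) (idmat r) = idmat r"
    by (rule ext)+ (auto simp: mmul_def idmat_def if_distrib[of "\<lambda>x. x * _"] cong: if_cong)
  moreover have "idmat r \<in> F3mats r r"
    by (auto simp: F3mats_def idmat_def)
  ultimately show ?thesis
    by (auto simp: F3invertible_def)
qed

lemma dist_to_unif_mmul_invertible:
  assumes "S \<in> F3invertible r"
  shows "dist_to_unif r n w (mmul r r n S M) = dist_to_unif r n w M"
proof -
  obtain T where ST: "mmul r r r S T = idmat r" and TS: "mmul r r r T S = idmat r"
    using assms by (auto simp: F3invertible_def)
  have bij: "bij_betw (mat_vec r T) (F3vecs r) (F3vecs r)"
    by (rule bij_betw_byWitness[where f'="mat_vec r S"])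
       (auto simp: mat_vec_mmul ST TS mat_vec_idmat mat_vec_in_F3vecs)
  have "syn_dist r n w (mmul r r n S M) s = syn_dist r n w M (mat_vec r T s)"
    if "s \<in> F3vecs r" for s
  proof -
    have "mat_vec r S x = s \<longleftrightarrow> x = mat_vec r T s" if "x \<in> F3vecs r" for x
      using \<open>s \<in> F3vecs r\<close> that by (auto simp: mat_vec_mmul ST TS mat_vec_idmat)
    then show ?thesis
      by (simp add: syn_dist_def syndrome_mmul syndrome_in_F3vecs)
  qed
  then show ?thesis
    unfolding dist_to_unif_def
    using sum.reindex_bij_betw[OF bij, of "\<lambda>s. \<bar>syn_dist r n w M s - 1 / 3 ^ r\<bar>"] by simp
qed

lemma syndrome_mmul_perm_mat:
  assumes p: "\<pi> permutes {..<n}"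
  shows "syndrome r n (mmul r n n M (perm_mat n \<pi>)) e = syndrome r n M (e \<circ> \<pi>)"
proof (rule ext)
  fix i
  have col: "(\<Sum>t<n. M i t * perm_mat n \<pi> t j) = M i (inv \<pi> j)" if "j < n" for j
  proof -
    have "inv \<pi> j < n"
      using permutes_in_image[OF permutes_inv[OF p]] that by auto
    moreover have "perm_mat n \<pi> t j = (if t = inv \<pi> j then 1 else 0)" if "t < n" for t
      using \<open>j < n\<close> that p by (auto simp: perm_mat_def permutes_inverses permutes_inv_eq)
    ultimately show ?thesis
      by (simp add: if_distrib[of "\<lambda>x. _ * x"] cong: if_cong)
  qed
  have "(\<Sum>j<n. ((\<Sum>t<n. M i t * perm_mat n \<pi> t j) mod 3) * e j) mod 3
      = (\<Sum>j<n. M i (inv \<pi> j) * e j) mod 3"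
    by (simp add: sum_mod_mult_left_eq col)
  also have "(\<Sum>j<n. M i (inv \<pi> j) * e j) = (\<Sum>t<n. M i t * e (\<pi> t))"
    using sum.reindex_bij_betw[OF permutes_imp_bij[OF p], of "\<lambda>j. M i (inv \<pi> j) * e j"] p
    by (simp add: permutes_inverses)
  finally show "syndrome r n (mmul r n n M (perm_mat n \<pi>)) e i = syndrome r n M (e \<circ> \<pi>) i"
    by (simp add: syndrome_def mmul_def)
qed

lemma comp_permutes_in_sphere:
  assumes p: "\<pi> permutes {..<n}" and e: "e \<in> sphere n w"
  shows "e \<circ> \<pi> \<in> sphere n w"
proof -
  have pi_lt: "\<pi> i < n \<longleftrightarrow> i < n" for i
    using permutes_in_image[OF p] by simp
  have "e \<circ> \<pi> \<in> F3vecs n"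
    using e pi_lt permutes_not_in[OF p] by (auto simp: sphere_def F3vecs_def)
  moreover have "{i. i < n \<and> e i \<noteq> 0} = \<pi> ` {i. i < n \<and> (e \<circ> \<pi>) i \<noteq> 0}"
  proof (intro equalityI subsetI)
    fix j assume j: "j \<in> {i. i < n \<and> e i \<noteq> 0}"
    then have "inv \<pi> j \<in> {i. i < n \<and> (e \<circ> \<pi>) i \<noteq> 0}"
      using permutes_in_image[OF permutes_inv[OF p]] by (simp add: permutes_inverses[OF p])
    then show "j \<in> \<pi> ` {i. i < n \<and> (e \<circ> \<pi>) i \<noteq> 0}"
      by (rule image_eqI[rotated]) (simp add: permutes_inverses[OF p])
  qed (use pi_lt in auto)
  then have "hweight n (e \<circ> \<pi>) = hweight n e"
    unfolding hweight_def by (simp add: card_image permutes_inj_on[OF p])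
  ultimately show ?thesis
    using e by (simp add: sphere_def)
qed

lemma dist_to_unif_mmul_perm_mat:
  assumes p: "\<pi> permutes {..<n}"
  shows "dist_to_unif r n w (mmul r n n M (perm_mat n \<pi>)) = dist_to_unif r n w M"
proof -
  have inv_comp: "f \<circ> inv \<pi> \<circ> \<pi> = f" "f \<circ> \<pi> \<circ> inv \<pi> = f" for f :: "nat \<Rightarrow> int"
    by (auto simp: fun_eq_iff permutes_inverses[OF p])
  have "card {e \<in> sphere n w. syndrome r n M (e \<circ> \<pi>) = s}
        = card {e \<in> sphere n w. syndrome r n M e = s}" for s
    by (rule bij_betw_same_card[where f="\<lambda>e. e \<circ> \<pi>"], rule bij_betw_byWitness[where f'="\<lambda>e. e \<circ> inv \<pi>"])
       (use p permutes_inv[OF p] comp_permutes_in_sphere inv_comp in auto)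
  then show ?thesis
    by (simp add: dist_to_unif_def syn_dist_def syndrome_mmul_perm_mat[OF p])
qed

definition collisions :: "nat \<Rightarrow> nat \<Rightarrow> nat \<Rightarrow> (nat \<Rightarrow> nat \<Rightarrow> int) \<Rightarrow> nat" where
  "collisions r n w H =
     card {p \<in> sphere n w \<times> sphere n w. syndrome r n H (fst p) = syndrome r n H (snd p)}"

section \<open>Collisions bound the distance to the uniform distribution\<close>

text \<open>By the definition of \<^const>\<open>collisions\<close>, this is \<open>3\<^sup>r \<Sum>\<^sub>s D(s)\<^sup>2 - 1\<close>
  for the syndrome distribution \<open>D\<close>.\<close>

definition collision_excess :: "nat \<Rightarrow> nat \<Rightarrow> nat \<Rightarrow> (nat \<Rightarrow> nat \<Rightarrow> int) \<Rightarrow> real" where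
  "collision_excess r n w H = 3 ^ r * real (collisions r n w H) / (real (card (sphere n w)))\<^sup>2 - 1"

lemma dist_to_unif_squared_le:
  assumes "w \<le> n"
  shows "(2 * dist_to_unif r n w H)\<^sup>2 \<le> collision_excess r n w H"
proof -
  let ?V = "F3vecs r" and ?S = "sphere n w" and ?D = "syn_dist r n w H"
  let ?fibre = "\<lambda>s. {e \<in> ?S. syndrome r n H e = s}"
  have N: "card ?S > 0"
    using assms by (simp add: card_sphere)
  have "(\<Sum>s\<in>?V. \<Sum>e\<in>?fibre s. 1::nat) = (\<Sum>e\<in>?S. 1)"
    by (rule sum.group[OF finite_sphere finite_F3vecs]) (auto simp: syndrome_in_F3vecs)
  then have "(\<Sum>s\<in>?V. ?D s) = 1"
    using N by (simp add: syn_dist_def flip: sum_divide_distrib of_nat_sum)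
  then have "(\<Sum>s\<in>?V. \<bar>?D s - 1 / 3 ^ r\<bar>)\<^sup>2 \<le> 3 ^ r * (\<Sum>s\<in>?V. (?D s)\<^sup>2) - 1"
    using sum_abs_diff_uniform_le[of ?V ?D] finite_F3vecs by (simp add: card_F3vecs)
  moreover have "collisions r n w H = (\<Sum>s\<in>?V. card (?fibre s) ^ 2)"
    unfolding collisions_def
    by (rule card_pairs_same_image) (auto simp: finite_sphere finite_F3vecs syndrome_in_F3vecs)
  then have "(\<Sum>s\<in>?V. (?D s)\<^sup>2) = real (collisions r n w H) / (real (card ?S))\<^sup>2"
    by (simp add: syn_dist_def power_divide sum_divide_distrib)
  ultimately show ?thesis
    by (simp add: dist_to_unif_def collision_excess_def)
qed

lemma collision_excess_nonneg:
  assumes "w \<le> n"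
  shows "0 \<le> collision_excess r n w H"
  using dist_to_unif_squared_le[OF assms] order_trans zero_le_power2 by blast

lemma dist_to_unif_le_collision_excess:
  assumes "w \<le> n"
  shows "dist_to_unif r n w H \<le> 1/2 * sqrt (collision_excess r n w H)"
  using real_le_rsqrt[OF dist_to_unif_squared_le[OF assms, of r H]] by simp

section \<open>Uniform matrices annihilating a vector\<close>

lemma F3mats_eq_PiE_dflt: "F3mats R m = PiE_dflt {..<R} (\<lambda>_. 0) (\<lambda>_. F3vecs m)"
proof (intro equalityI subsetI)
  fix H assume H: "H \<in> PiE_dflt {..<R} (\<lambda>_. 0) (\<lambda>_. F3vecs m)"
  show "H \<in> F3mats R m"
    unfolding F3mats_def
  proof (intro CollectI allI conjI impI)
    fix i j assume "i < R \<and> j < m"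
    then show "H i j \<in> {0,1,2}"
      using H by (auto simp: PiE_dflt_def F3vecs_def)
  next
    fix i j assume "\<not> (i < R \<and> j < m)"
    then show "H i j = 0"
      using H by (cases "i < R") (auto simp: PiE_dflt_def F3vecs_def)
  qed
qed (auto simp: F3mats_def PiE_dflt_def F3vecs_def fun_eq_iff)

lemma finite_F3mats: "finite (F3mats R m)"
  unfolding F3mats_eq_PiE_dflt by (rule finite_PiE_dflt) (auto simp: finite_F3vecs)

lemma card_F3mats: "card (F3mats R m) = 3 ^ (R * m)"
  unfolding F3mats_eq_PiE_dflt by (simp add: card_PiE_dflt card_F3vecs) (metis power_mult mult.commute)

text \<open>Adding \<open>y\<^sub>k\<inverse>\<close> to the coordinate \<open>k\<close> shifts the scalar product with \<open>y\<close> by one.\<close>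

lemma card_F3vecs_dot_mod_le_succ:
  assumes k: "k < m" and yk: "\<not> (3::int) dvd y k"
  shows "card {h \<in> F3vecs m. (\<Sum>j<m. h j * y j) mod 3 = t}
         \<le> card {h \<in> F3vecs m. (\<Sum>j<m. h j * y j) mod 3 = (t + 1) mod 3}"
proof -
  define u where "u = y k mod 3"
  have "u = 1 \<or> u = 2"
    using yk mod_3_cases[of "y k"] by (auto simp: u_def dvd_eq_mod_eq_0)
  then have uy: "(u * y k) mod 3 = 1"
    by (auto simp: u_def mod_mult_right_eq[of _ "y k", symmetric])
  define shift where "shift h = h(k := (h k + u) mod 3)" for h :: "nat \<Rightarrow> int"
  have "(\<Sum>j<m. shift h j * y j) = (\<Sum>j<m. h j * y j) + ((h k + u) mod 3 - h k) * y k" for h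
  proof -
    have "(\<Sum>j<m. f j) = f k + (\<Sum>j\<in>{..<m}-{k}. f j)" for f :: "nat \<Rightarrow> int"
      using k by (intro sum.remove) auto
    then show ?thesis
      by (simp add: shift_def algebra_simps)
  qed
  moreover have "(((h k + u) mod 3 - h k) * y k) mod 3 = (u * y k) mod 3" for h
    by (metis add_diff_cancel_left' mod_diff_left_eq mod_mult_left_eq)
  ultimately have shift_dot: "(\<Sum>j<m. shift h j * y j) mod 3 = ((\<Sum>j<m. h j * y j) mod 3 + 1) mod 3" for h
    using uy by (metis mod_add_eq mod_mod_trivial)
  have "inj_on shift (F3vecs m)"
  proof (rule inj_onI)
    fix g h assume "g \<in> F3vecs m" "h \<in> F3vecs m" and eq: "shift g = shift h"
    then have "g k \<in> {0,1,2}" "h k \<in> {0,1,2}"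
      using k by (auto simp: F3vecs_def)
    moreover have "(g k + u) mod 3 = (h k + u) mod 3"
      using eq unfolding shift_def by (metis fun_upd_same)
    ultimately have "g k = h k"
      using \<open>u = 1 \<or> u = 2\<close> by auto
    then show "g = h"
      using eq unfolding shift_def by (metis fun_upd_triv fun_upd_upd)
  qed
  moreover have "shift h \<in> F3vecs m" if "h \<in> F3vecs m" for h
    using that k mod_3_cases by (auto simp: shift_def F3vecs_def)
  ultimately show ?thesis
    by (intro card_inj_on_le[of shift]) (auto simp: finite_F3vecs shift_dot mod_add_left_eq intro: inj_on_subset)
qed

lemma card_F3vecs_orthogonal:
  assumes "k < m" and "\<not> (3::int) dvd y k"
  shows "card {h \<in> F3vecs m. (3::int) dvd (\<Sum>j<m. h j * y j)} = 3 ^ (m - 1)"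
proof -
  define A where "A t = {h \<in> F3vecs m. (\<Sum>j<m. h j * y j) mod 3 = t}" for t :: int
  have le: "card (A 0) \<le> card (A 1)" "card (A 1) \<le> card (A 2)" "card (A 2) \<le> card (A 0)"
    using card_F3vecs_dot_mod_le_succ[where y=y, OF assms, of 0]
      card_F3vecs_dot_mod_le_succ[where y=y, OF assms, of 1]
      card_F3vecs_dot_mod_le_succ[where y=y, OF assms, of 2]
    by (simp_all add: A_def)
  have union: "F3vecs m = A 0 \<union> A 1 \<union> A 2"
    using mod_3_cases by (auto simp: A_def)
  have "finite (A t)" for t
    by (simp add: A_def finite_F3vecs)
  then have "card (F3vecs m) = card (A 0) + card (A 1) + card (A 2)"
    unfolding union by (subst card_Un_disjoint, auto simp: A_def card_Un_disjoint)+
  then have "3 * 3 ^ (m - 1) = 3 * card (A 0)"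
    using le \<open>k < m\<close> by (simp add: card_F3vecs flip: power_Suc)
  then show ?thesis
    by (simp add: A_def dvd_eq_mod_eq_0)
qed

definition annihilators :: "nat \<Rightarrow> nat \<Rightarrow> (nat \<Rightarrow> int) \<Rightarrow> (nat \<Rightarrow> nat \<Rightarrow> int) set" where
  "annihilators R m y = {H \<in> F3mats R m. \<forall>i<R. (3::int) dvd (\<Sum>j<m. H i j * y j)}"

lemma card_annihilators:
  "real (card (annihilators R m y))
   = card (F3mats R m) * (if \<forall>j<m. (3::int) dvd y j then 1 else 1 / 3 ^ R)"
proof -
  let ?rows = "{h \<in> F3vecs m. (3::int) dvd (\<Sum>j<m. h j * y j)}"
  have "annihilators R m y = PiE_dflt {..<R} (\<lambda>_. 0) (\<lambda>_. ?rows)"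
    by (auto simp: annihilators_def F3mats_eq_PiE_dflt PiE_dflt_def)
  then have card: "card (annihilators R m y) = card ?rows ^ R"
    by (simp add: card_PiE_dflt)
  show ?thesis
  proof (cases "\<forall>j<m. (3::int) dvd y j")
    case True
    then have "?rows = F3vecs m"
      by (auto intro!: dvd_sum)
    then show ?thesis
      using True by (simp add: card card_F3vecs card_F3mats) (metis power_mult mult.commute)
  next
    case False
    then obtain k where "k < m" "\<not> (3::int) dvd y k" by auto
    moreover have "R * m = (m - 1) * R + R"
      using \<open>k < m\<close> by (cases m) (auto simp: algebra_simps)
    ultimately show ?thesis
      unfolding if_not_P[OF False]
      by (simp add: card card_F3mats card_F3vecs_orthogonal power_add flip: power_mult)
  qed
qed

section \<open>Collisions for the secret parity-check matrix\<close>

lemma sum_lessThan_double: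
  fixes f :: "nat \<Rightarrow> 'a::comm_monoid_add"
  shows "(\<Sum>j<2*m. f j) = (\<Sum>j<m. f j + f (m + j))"
proof -
  have "(\<Sum>j<m + k. f j) = (\<Sum>j<m. f j) + (\<Sum>j<k. f (m + j))" for k
    by (induction k) (simp_all add: add.assoc)
  then show ?thesis
    by (simp add: mult_2 sum.distrib)
qed

lemma syndrome_eq_iff:
  "syndrome r n H e = syndrome r n H e' \<longleftrightarrow> (\<forall>i<r. (3::int) dvd (\<Sum>j<n. H i j * (e - e') j))"
proof -
  have "syndrome r n H e = syndrome r n H e'
      \<longleftrightarrow> (\<forall>i<r. (\<Sum>j<n. H i j * e j) mod 3 = (\<Sum>j<n. H i j * e' j) mod 3)"
    by (auto simp: syndrome_def fun_eq_iff)
  also have "\<dots> \<longleftrightarrow> (\<forall>i<r. (3::int) dvd (\<Sum>j<n. H i j * (e - e') j))"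
    by (simp add: mod_eq_dvd_iff sum_subtractf right_diff_distrib)
  finally show ?thesis .
qed

lemma dvd_sum_mult_cong_mod:
  fixes f g z :: "nat \<Rightarrow> int"
  assumes "\<And>j. j \<in> A \<Longrightarrow> f j mod 3 = g j mod 3"
  shows "3 dvd (\<Sum>j\<in>A. f j * z j) \<longleftrightarrow> 3 dvd (\<Sum>j\<in>A. g j * z j)"
proof -
  have "(\<Sum>j\<in>A. f j * z j) mod 3 = (\<Sum>j\<in>A. (f j mod 3) * z j) mod 3"
    by (rule sum_mod_mult_left_eq[symmetric])
  also have "\<dots> = (\<Sum>j\<in>A. (g j mod 3) * z j) mod 3"
    using assms by (simp cong: sum.cong)
  also have "\<dots> = (\<Sum>j\<in>A. g j * z j) mod 3"
    by (rule sum_mod_mult_left_eq)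
  finally show ?thesis
    by (simp add: dvd_eq_mod_eq_0)
qed

text \<open>The paper's \<open>e\<^sub>U = d \<odot> e\<^sub>1 - b \<odot> e\<^sub>2\<close> and \<open>e\<^sub>V = - c \<odot> e\<^sub>1 + a \<odot> e\<^sub>2\<close>
  for \<open>e = (e\<^sub>1, e\<^sub>2)\<close>, not reduced modulo 3.\<close>

definition U_component :: "nat \<Rightarrow> (nat \<Rightarrow> int) \<Rightarrow> (nat \<Rightarrow> int) \<Rightarrow> (nat \<Rightarrow> int) \<Rightarrow> nat \<Rightarrow> int" where
  "U_component m b d e = (\<lambda>j. d j * e j - b j * e (m + j))"

definition V_component :: "nat \<Rightarrow> (nat \<Rightarrow> int) \<Rightarrow> (nat \<Rightarrow> int) \<Rightarrow> (nat \<Rightarrow> int) \<Rightarrow> nat \<Rightarrow> int" where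
  "V_component m a c e = (\<lambda>j. a j * e (m + j) - c j * e j)"

lemma dvd_Hsk_row_U:
  assumes "i < m - kU"
  shows "3 dvd (\<Sum>j<2*m. Hsk m kU kV a b c d HU HV i j * z j)
     \<longleftrightarrow> 3 dvd (\<Sum>j<m. HU i j * U_component m b d z j)"
proof -
  let ?g = "\<lambda>j. if j < m then HU i j * d j else - HU i (j - m) * b (j - m)"
  have "3 dvd (\<Sum>j<2*m. Hsk m kU kV a b c d HU HV i j * z j) \<longleftrightarrow> 3 dvd (\<Sum>j<2*m. ?g j * z j)"
    by (rule dvd_sum_mult_cong_mod) (use assms in \<open>simp add: Hsk_def\<close>)
  also have "(\<Sum>j<2*m. ?g j * z j) = (\<Sum>j<m. HU i j * U_component m b d z j)"
    unfolding sum_lessThan_double by (simp add: U_component_def algebra_simps)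
  finally show ?thesis .
qed

lemma dvd_Hsk_row_V:
  assumes "i < m - kV"
  shows "3 dvd (\<Sum>j<2*m. Hsk m kU kV a b c d HU HV (m - kU + i) j * z j)
     \<longleftrightarrow> 3 dvd (\<Sum>j<m. HV i j * V_component m a c z j)"
proof -
  let ?g = "\<lambda>j. if j < m then - HV i j * c j else HV i (j - m) * a (j - m)"
  have "3 dvd (\<Sum>j<2*m. Hsk m kU kV a b c d HU HV (m - kU + i) j * z j) \<longleftrightarrow> 3 dvd (\<Sum>j<2*m. ?g j * z j)"
    by (rule dvd_sum_mult_cong_mod) (use assms in \<open>simp add: Hsk_def\<close>)
  also have "(\<Sum>j<2*m. ?g j * z j) = (\<Sum>j<m. HV i j * V_component m a c z j)"
    unfolding sum_lessThan_double by (simp add: V_component_def algebra_simps)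
  finally show ?thesis .
qed

lemma syndrome_Hsk_eq_iff:
  assumes "kU \<le> m"
  shows "syndrome ((m - kU) + (m - kV)) (2*m) (Hsk m kU kV a b c d HU HV) e
       = syndrome ((m - kU) + (m - kV)) (2*m) (Hsk m kU kV a b c d HU HV) e'
     \<longleftrightarrow> (\<forall>i<m - kU. 3 dvd (\<Sum>j<m. HU i j * U_component m b d (e - e') j))
       \<and> (\<forall>i<m - kV. 3 dvd (\<Sum>j<m. HV i j * V_component m a c (e - e') j))"
proof -
  let ?P = "\<lambda>i. 3 dvd (\<Sum>j<2*m. Hsk m kU kV a b c d HU HV i j * (e - e') j)"
  have rows: "(\<forall>i<(m - kU) + (m - kV). ?P i) \<longleftrightarrow> (\<forall>i<m - kU. ?P i) \<and> (\<forall>i<m - kV. ?P (m - kU + i))"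
  proof (intro iffI allI impI conjI)
    fix i assume all: "(\<forall>i<m - kU. ?P i) \<and> (\<forall>i<m - kV. ?P (m - kU + i))"
      and "i < (m - kU) + (m - kV)"
    then show "?P i"
      by (cases "i < m - kU") (auto dest: spec[of _ "i - (m - kU)"])
  qed auto
  have "?P i \<longleftrightarrow> 3 dvd (\<Sum>j<m. HU i j * U_component m b d (e - e') j)" if "i < m - kU" for i
    using dvd_Hsk_row_U[OF that] .
  moreover have "?P (m - kU + i) \<longleftrightarrow> 3 dvd (\<Sum>j<m. HV i j * V_component m a c (e - e') j)"
    if "i < m - kV" for i
    using dvd_Hsk_row_V[OF that] .
  ultimately show ?thesis
    unfolding syndrome_eq_iff rows by blast
qed

lemma sum_collisions_Hsk:
  assumes "kU \<le> m"
  shows "(\<Sum>HU\<in>F3mats (m - kU) m. \<Sum>HV\<in>F3mats (m - kV) m.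
            collisions ((m - kU) + (m - kV)) (2*m) w (Hsk m kU kV a b c d HU HV))
       = (\<Sum>p\<in>sphere (2*m) w \<times> sphere (2*m) w.
            card (annihilators (m - kU) m (U_component m b d (fst p - snd p)))
          * card (annihilators (m - kV) m (V_component m a c (fst p - snd p))))"
proof -
  let ?S = "sphere (2*m) w" and ?MU = "F3mats (m - kU) m" and ?MV = "F3mats (m - kV) m"
  let ?AU = "\<lambda>p. annihilators (m - kU) m (U_component m b d (fst p - snd p))"
  let ?AV = "\<lambda>p. annihilators (m - kV) m (V_component m a c (fst p - snd p))"
  let ?ind = "\<lambda>HU HV p. of_bool (HU \<in> ?AU p) * of_bool (HV \<in> ?AV p) :: nat"
  have "collisions ((m - kU) + (m - kV)) (2*m) w (Hsk m kU kV a b c d HU HV) = (\<Sum>p\<in>?S \<times> ?S. ?ind HU HV p)"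
    if "HU \<in> ?MU" "HV \<in> ?MV" for HU HV
    using that finite_sphere
    by (simp add: collisions_def syndrome_Hsk_eq_iff[OF assms] annihilators_def Int_def
        flip: of_bool_conj)
  then have "(\<Sum>HU\<in>?MU. \<Sum>HV\<in>?MV. collisions ((m - kU) + (m - kV)) (2*m) w (Hsk m kU kV a b c d HU HV))
      = (\<Sum>HU\<in>?MU. \<Sum>HV\<in>?MV. \<Sum>p\<in>?S \<times> ?S. ?ind HU HV p)"
    by simp
  also have "\<dots> = (\<Sum>p\<in>?S \<times> ?S. \<Sum>HU\<in>?MU. \<Sum>HV\<in>?MV. ?ind HU HV p)"
    by (subst sum.swap) (simp only: sum.swap[of _ ?MV])
  also have "\<dots> = (\<Sum>p\<in>?S \<times> ?S. (\<Sum>HU\<in>?MU. of_bool (HU \<in> ?AU p)) * (\<Sum>HV\<in>?MV. of_bool (HV \<in> ?AV p)))"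
    by (simp only: sum_product)
  also have "\<dots> = (\<Sum>p\<in>?S \<times> ?S. card (?AU p) * card (?AV p))"
  proof -
    have "(\<Sum>HU\<in>?MU. of_bool (HU \<in> ?AU p)) = card (?AU p)" for p
      by (simp add: finite_F3mats annihilators_def Int_def)
    moreover have "(\<Sum>HV\<in>?MV. of_bool (HV \<in> ?AV p)) = card (?AV p)" for p
      by (simp add: finite_F3mats annihilators_def Int_def)
    ultimately show ?thesis
      by (simp only:)
  qed
  finally show ?thesis .
qed

text \<open>Since \<open>a d - b c\<close> is a unit, \<open>(e\<^sub>1, e\<^sub>2) \<mapsto> (e\<^sub>U, e\<^sub>V)\<close> is injective modulo 3.\<close>

lemma eq_if_dvd_U_V_components:
  assumes "e \<in> F3vecs (2*m)" "e' \<in> F3vecs (2*m)"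
    and det: "\<forall>j<m. (a j * d j - b j * c j) mod 3 = 1"
    and U: "\<forall>j<m. 3 dvd U_component m b d (e - e') j"
    and V: "\<forall>j<m. 3 dvd V_component m a c (e - e') j"
  shows "e = e'"
proof (rule F3vecs_eq_if_dvd_diff[OF assms(1,2)])
  let ?z = "e - e'"
  have unit: "3 dvd x" if "3 dvd (a j * d j - b j * c j) * x" "j < m" for j and x :: int
    using that det by (metis dvd_eq_mod_eq_0 mod_mult_left_eq mult_1)
  have "a j * U_component m b d ?z j + b j * V_component m a c ?z j = (a j * d j - b j * c j) * ?z j"
    and "c j * U_component m b d ?z j + d j * V_component m a c ?z j = (a j * d j - b j * c j) * ?z (m + j)"
    for j
    by (simp_all add: U_component_def V_component_def algebra_simps)
  moreover have "3 dvd a j * U_component m b d ?z j + b j * V_component m a c ?z j"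
    and "3 dvd c j * U_component m b d ?z j + d j * V_component m a c ?z j" if "j < m" for j
    using U V that by simp_all
  ultimately have z: "3 dvd ?z j" "3 dvd ?z (m + j)" if "j < m" for j
    using that unit by metis+
  show "3 dvd (e i - e' i)" if "i < 2*m" for i
  proof (cases "i < m")
    case False
    then have "i = m + (i - m)" "i - m < m"
      using that by auto
    then show ?thesis
      using z(2)[of "i - m"] by simp
  qed (use z in simp)
qed

definition U_collisions ::
    "nat \<Rightarrow> (nat \<Rightarrow> int) \<Rightarrow> (nat \<Rightarrow> int) \<Rightarrow> nat \<Rightarrow> ((nat \<Rightarrow> int) \<times> (nat \<Rightarrow> int)) set" where
  "U_collisions m b d w = {p \<in> sphere (2*m) w \<times> sphere (2*m) w.
     \<forall>j<m. 3 dvd U_component m b d (fst p - snd p) j}"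

definition V_collisions ::
    "nat \<Rightarrow> (nat \<Rightarrow> int) \<Rightarrow> (nat \<Rightarrow> int) \<Rightarrow> nat \<Rightarrow> ((nat \<Rightarrow> int) \<times> (nat \<Rightarrow> int)) set" where
  "V_collisions m a c w = {p \<in> sphere (2*m) w \<times> sphere (2*m) w.
     \<forall>j<m. 3 dvd V_component m a c (fst p - snd p) j}"

lemma annihilation_densities_le:
  "(if u then 1 else 1 / 3 ^ rU) * (if v then 1 else 1 / 3 ^ rV :: real)
   \<le> of_bool (u \<and> v) + 1 / 3 ^ (rU + rV) + of_bool v / 3 ^ rU + of_bool u / 3 ^ rV"
  by (cases u; cases v) (simp_all add: power_add)

lemma sum_collisions_Hsk_eq_densities:
  assumes "kU \<le> m"
  shows "(\<Sum>HU\<in>F3mats (m - kU) m. \<Sum>HV\<in>F3mats (m - kV) m.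
            real (collisions ((m - kU) + (m - kV)) (2*m) w (Hsk m kU kV a b c d HU HV)))
       = real (card (F3mats (m - kU) m)) * real (card (F3mats (m - kV) m))
         * (\<Sum>p\<in>sphere (2*m) w \<times> sphere (2*m) w.
              (if \<forall>j<m. 3 dvd U_component m b d (fst p - snd p) j then 1 else 1 / 3 ^ (m - kU))
            * (if \<forall>j<m. 3 dvd V_component m a c (fst p - snd p) j then 1 else 1 / 3 ^ (m - kV)))"
  unfolding of_nat_sum[symmetric] sum_collisions_Hsk[OF assms]
  by (simp add: card_annihilators sum_distrib_left mult_ac)

lemma sum_collisions_Hsk_le:
  fixes m w :: nat
  assumes "kU \<le> m" and det: "\<forall>j<m. (a j * d j - b j * c j) mod 3 = 1"
  defines "N \<equiv> real (card (sphere (2*m) w))"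
  shows "(\<Sum>HU\<in>F3mats (m - kU) m. \<Sum>HV\<in>F3mats (m - kV) m.
            real (collisions ((m - kU) + (m - kV)) (2*m) w (Hsk m kU kV a b c d HU HV)))
       \<le> real (card (F3mats (m - kU) m)) * real (card (F3mats (m - kV) m))
         * (N + N\<^sup>2 / 3 ^ ((m - kU) + (m - kV))
            + real (card (V_collisions m a c w)) / 3 ^ (m - kU) + real (card (U_collisions m b d w)) / 3 ^ (m - kV))"
proof -
  let ?S = "sphere (2*m) w" and ?rU = "m - kU" and ?rV = "m - kV"
  let ?zU = "\<lambda>p. \<forall>j<m. 3 dvd U_component m b d (fst p - snd p) j"
  let ?zV = "\<lambda>p. \<forall>j<m. 3 dvd V_component m a c (fst p - snd p) j"
  let ?f = "\<lambda>p. (if ?zU p then 1 else 1 / 3 ^ ?rU) * (if ?zV p then 1 else 1 / 3 ^ ?rV) :: real"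
  let ?g = "\<lambda>p. of_bool (fst p = snd p) + 1 / 3 ^ (?rU + ?rV)
              + of_bool (?zV p) / 3 ^ ?rU + of_bool (?zU p) / 3 ^ ?rV :: real"
  have diagonal: "?S \<times> ?S \<inter> {p. fst p = snd p} = (\<lambda>e. (e, e)) ` ?S"
    by auto
  have "(\<Sum>p\<in>?S \<times> ?S. ?f p) \<le> (\<Sum>p\<in>?S \<times> ?S. ?g p)"
  proof (rule sum_mono)
    fix p assume p: "p \<in> ?S \<times> ?S"
    have "?zU p \<and> ?zV p \<Longrightarrow> fst p = snd p"
      using p det by (intro eq_if_dvd_U_V_components) (auto simp: sphere_def)
    then have "of_bool (?zU p \<and> ?zV p) \<le> (of_bool (fst p = snd p) :: real)"
      by auto
    then show "?f p \<le> ?g p"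
      using annihilation_densities_le[of "?zU p" ?rU "?zV p" ?rV] by linarith
  qed
  also have "(\<Sum>p\<in>?S \<times> ?S. ?g p) = N + N\<^sup>2 / 3 ^ (?rU + ?rV)
      + real (card (V_collisions m a c w)) / 3 ^ ?rU + real (card (U_collisions m b d w)) / 3 ^ ?rV"
    using diagonal by (simp add: sum.distrib N_def card_cartesian_product power2_eq_square finite_sphere card_image
        inj_on_def V_collisions_def U_collisions_def Int_def flip: sum_divide_distrib)
  finally show ?thesis
    unfolding sum_collisions_Hsk_eq_densities[OF assms(1)] by (simp add: mult_left_mono)
qed

lemma average_collision_excess_Hsk_le:
  fixes m w :: nat
  assumes "kU \<le> m" "w \<le> 2*m" and det: "\<forall>j<m. (a j * d j - b j * c j) mod 3 = 1"
  defines "N \<equiv> real (card (sphere (2*m) w))"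
  shows "(\<Sum>HU\<in>F3mats (m - kU) m. \<Sum>HV\<in>F3mats (m - kV) m.
            collision_excess ((m - kU) + (m - kV)) (2*m) w (Hsk m kU kV a b c d HU HV))
         / (real (card (F3mats (m - kU) m)) * real (card (F3mats (m - kV) m)))
       \<le> 3 ^ ((m - kU) + (m - kV)) / N + 3 ^ (m - kV) * real (card (V_collisions m a c w)) / N\<^sup>2
         + 3 ^ (m - kU) * real (card (U_collisions m b d w)) / N\<^sup>2"
proof -
  define rU rV where "rU = m - kU" and "rV = m - kV"
  let ?MU = "F3mats rU m" and ?MV = "F3mats rV m"
  let ?K = "real (card ?MU) * real (card ?MV)"
  let ?coll = "\<lambda>HU HV. real (collisions (rU + rV) (2*m) w (Hsk m kU kV a b c d HU HV))"
  let ?B = "N + N\<^sup>2 / 3 ^ (rU + rV) + real (card (V_collisions m a c w)) / 3 ^ rU + real (card (U_collisions m b d w)) / 3 ^ rV"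
  have N: "N > 0" and MU: "card ?MU > 0" and MV: "card ?MV > 0"
    using assms(2) by (simp_all add: N_def card_sphere card_F3mats)
  then have K: "?K > 0"
    by simp
  have "(\<Sum>HU\<in>?MU. \<Sum>HV\<in>?MV. collision_excess (rU + rV) (2*m) w (Hsk m kU kV a b c d HU HV))
      = 3 ^ (rU + rV) / N\<^sup>2 * (\<Sum>HU\<in>?MU. \<Sum>HV\<in>?MV. ?coll HU HV) - ?K"
    by (simp add: collision_excess_def N_def sum_subtractf sum_distrib_left sum_divide_distrib)
  also have "\<dots> \<le> 3 ^ (rU + rV) / N\<^sup>2 * (?K * ?B) - ?K"
    using sum_collisions_Hsk_le[OF assms(1) det, of kV w] unfolding rU_def rV_def N_def
    by (intro diff_right_mono mult_left_mono) simp_all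
  finally have "(\<Sum>HU\<in>?MU. \<Sum>HV\<in>?MV. collision_excess (rU + rV) (2*m) w (Hsk m kU kV a b c d HU HV)) / ?K
      \<le> (3 ^ (rU + rV) / N\<^sup>2 * (?K * ?B) - ?K) / ?K"
    using K by (simp add: divide_right_mono)
  also have "\<dots> = 3 ^ (rU + rV) / N + 3 ^ rV * real (card (V_collisions m a c w)) / N\<^sup>2
      + 3 ^ rU * real (card (U_collisions m b d w)) / N\<^sup>2"
    using N MU MV by (simp add: field_simps power_add power2_eq_square)
  finally show ?thesis
    by (simp add: rU_def rV_def)
qed

section \<open>Pairs with equal \<open>e\<^sub>V\<close>\<close>

definition V_part :: "nat \<Rightarrow> (nat \<Rightarrow> int) \<Rightarrow> (nat \<Rightarrow> int) \<Rightarrow> (nat \<Rightarrow> int) \<Rightarrow> nat \<Rightarrow> int" where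
  "V_part m a c e = (\<lambda>j. if j < m then V_component m a c e j mod 3 else 0)"

lemma V_part_in_F3vecs: "V_part m a c e \<in> F3vecs m"
  using mod_3_cases by (auto simp: V_part_def F3vecs_def)

lemma V_collisions_eq:
  "V_collisions m a c w
   = {p \<in> sphere (2*m) w \<times> sphere (2*m) w. V_part m a c (fst p) = V_part m a c (snd p)}"
proof -
  have "V_component m a c (e - e') j = V_component m a c e j - V_component m a c e' j" for e e' j
    by (simp add: V_component_def algebra_simps)
  then have "(\<forall>j<m. 3 dvd V_component m a c (e - e') j) \<longleftrightarrow> V_part m a c e = V_part m a c e'" for e e'
    by (auto simp: V_part_def fun_eq_iff mod_eq_dvd_iff)
  then show ?thesis
    by (simp add: V_collisions_def)
qed

text \<open>Weight enumerators of the pairs \<open>(e\<^sub>j, e\<^sub>m\<^sub>+\<^sub>j) \<in> \<bbbF>\<^sub>3\<^sup>2\<close> with a zero,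
  respectively a given nonzero, \<open>V\<close>-coordinate.\<close>

definition block_enum_zero :: "nat poly" where "block_enum_zero = monom 2 2 + monom 1 0"

definition block_enum_nonzero :: "nat poly" where "block_enum_nonzero = monom 2 1 + monom 1 2"

lemma block_weight_enum:
  fixes \<alpha> \<gamma> t :: int
  assumes "\<alpha> \<in> {1,2}" "\<gamma> \<in> {1,2}" "t \<in> {0,1,2}"
  shows "(\<Sum>xy\<in>{xy \<in> {0,1,2} \<times> {0,1,2}. (\<alpha> * snd xy - \<gamma> * fst xy) mod 3 = t}.
            monom (1::nat) (of_bool (fst xy \<noteq> 0) + of_bool (snd xy \<noteq> 0)))
       = (if t = 0 then block_enum_zero else block_enum_nonzero)"
proof -
  let ?P = "\<lambda>xy::int \<times> int. (\<alpha> * snd xy - \<gamma> * fst xy) mod 3 = t"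
  let ?f = "\<lambda>xy::int \<times> int. monom (1::nat) (of_bool (fst xy \<noteq> 0) + of_bool (snd xy \<noteq> 0))"
  have pairs: "{0,1,2::int} \<times> {0,1,2::int} = {(0,0),(0,1),(0,2),(1,0),(1,1),(1,2),(2,0),(2,1),(2,2)}"
    by auto
  have "(\<Sum>xy\<in>{xy \<in> {0,1,2} \<times> {0,1,2}. ?P xy}. ?f xy)
      = (\<Sum>xy\<in>{(0,0),(0,1),(0,2),(1,0),(1,1),(1,2),(2,0),(2,1),(2,2)}. if ?P xy then ?f xy else 0)"
    unfolding pairs by (rule sum.inter_filter) simp
  also have "\<dots> = (if t = 0 then block_enum_zero else block_enum_nonzero)"
  proof -
    from assms have "\<alpha> = 1 \<or> \<alpha> = 2" "\<gamma> = 1 \<or> \<gamma> = 2" "t = 0 \<or> t = 1 \<or> t = 2"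
      by auto
    then show ?thesis
      by (elim disjE) (simp_all add: block_enum_zero_def block_enum_nonzero_def poly_eq_iff coeff_monom)
  qed
  finally show ?thesis .
qed

definition V_fibre_size :: "nat \<Rightarrow> nat \<Rightarrow> nat \<Rightarrow> nat" where
  "V_fibre_size m w k = coeff (block_enum_nonzero ^ k * block_enum_zero ^ (m - k)) w"

definition pair_halves :: "nat \<Rightarrow> (nat \<Rightarrow> int) \<Rightarrow> nat \<Rightarrow> int \<times> int" where
  "pair_halves m e = (\<lambda>j. if j < m then (e j, e (m + j)) else (0, 0))"

definition unpair_halves :: "nat \<Rightarrow> (nat \<Rightarrow> int \<times> int) \<Rightarrow> nat \<Rightarrow> int" where
  "unpair_halves m p = (\<lambda>i. if i < m then fst (p i) else if i < 2*m then snd (p (i - m)) else 0)"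

lemma bij_betw_pair_halves:
  "bij_betw (pair_halves m) (F3vecs (2*m)) (PiE_dflt {..<m} (0, 0) (\<lambda>_. {0,1,2} \<times> {0,1,2}))"
proof (rule bij_betw_byWitness[where f'="unpair_halves m"])
  show "\<forall>e\<in>F3vecs (2*m). unpair_halves m (pair_halves m e) = e"
    by (auto simp: pair_halves_def unpair_halves_def F3vecs_def fun_eq_iff)
  show "\<forall>p\<in>PiE_dflt {..<m} (0, 0) (\<lambda>_. {0,1,2} \<times> {0,1,2}). pair_halves m (unpair_halves m p) = p"
    by (auto simp: pair_halves_def unpair_halves_def PiE_dflt_def fun_eq_iff)
  show "pair_halves m ` F3vecs (2*m) \<subseteq> PiE_dflt {..<m} (0, 0) (\<lambda>_. {0,1,2} \<times> {0,1,2})"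
  proof (intro image_subsetI)
    fix e assume "e \<in> F3vecs (2*m)"
    then have "e j \<in> {0,1,2} \<and> e (m + j) \<in> {0,1,2}" if "j < m" for j
      using that by (simp add: F3vecs_def)
    then show "pair_halves m e \<in> PiE_dflt {..<m} (0, 0) (\<lambda>_. {0,1,2} \<times> {0,1,2})"
      unfolding PiE_dflt_def by (simp only: pair_halves_def mem_Times_iff) simp
  qed
  show "unpair_halves m ` PiE_dflt {..<m} (0, 0) (\<lambda>_. {0,1,2} \<times> {0,1,2}) \<subseteq> F3vecs (2*m)"
  proof (intro image_subsetI)
    fix p :: "nat \<Rightarrow> int \<times> int"
    assume "p \<in> PiE_dflt {..<m} (0, 0) (\<lambda>_. {0,1,2} \<times> {0,1,2})"
    then have "fst (p j) \<in> {0,1,2} \<and> snd (p j) \<in> {0,1,2}" if "j < m" for j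
      using that by (simp only: PiE_dflt_def mem_Times_iff) simp
    then show "unpair_halves m p \<in> F3vecs (2*m)"
      unfolding F3vecs_def unpair_halves_def by auto
  qed
qed

lemma hweight_pair_halves:
  "hweight (2*m) e = (\<Sum>j<m. of_bool (fst (pair_halves m e j) \<noteq> 0) + of_bool (snd (pair_halves m e j) \<noteq> 0))"
  unfolding hweight_eq_sum sum_lessThan_double by (simp add: pair_halves_def)

lemma prod_if_zero_eq_power_hweight:
  "(\<Prod>j<m. if v j = 0 then p else q) = p ^ (m - hweight m v) * q ^ hweight m v"
proof -
  have weight: "hweight m v = card ({..<m} \<inter> - {j. v j = 0})"
    unfolding hweight_def by (rule arg_cong[where f=card]) auto
  moreover have "card ({..<m} \<inter> {j. v j = 0}) + card ({..<m} \<inter> - {j. v j = 0}) = m"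
    using card_Un_disjoint[of "{..<m} \<inter> {j. v j = 0}" "{..<m} \<inter> - {j. v j = 0}"]
    by (simp add: Int_Un_distrib[symmetric] Int_assoc)
  ultimately have "card ({..<m} \<inter> {j. v j = 0}) = m - hweight m v"
    by simp
  then show ?thesis
    using weight by (simp add: prod.If_cases)
qed

lemma card_V_fibre:
  assumes ac: "\<forall>j<m. a j \<in> {1,2} \<and> c j \<in> {1,2}" and v: "v \<in> F3vecs m"
  shows "card {e \<in> sphere (2*m) w. V_part m a c e = v} = V_fibre_size m w (hweight m v)"
proof -
  define B where "B j = {xy \<in> {0,1,2} \<times> {0,1,2}. (a j * snd xy - c j * fst xy) mod 3 = v j}" for j
  define wt where "wt xy = (of_bool (fst xy \<noteq> 0) + of_bool (snd xy \<noteq> 0) :: nat)" for xy :: "int \<times> int"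
  let ?P = "\<lambda>y. (\<forall>j<m. (a j * snd (y j) - c j * fst (y j)) mod 3 = v j) \<and> (\<Sum>j<m. wt (y j)) = w"
  have bij: "bij_betw (pair_halves m) {e \<in> F3vecs (2*m). ?P (pair_halves m e)}
          {y \<in> PiE_dflt {..<m} (0, 0) (\<lambda>_. {0,1,2} \<times> {0,1,2}). ?P y}"
    by (rule bij_betw_Collect[OF bij_betw_pair_halves]) simp
  have src: "{e \<in> F3vecs (2*m). ?P (pair_halves m e)} = {e \<in> sphere (2*m) w. V_part m a c e = v}"
    using v by (auto simp: sphere_def hweight_pair_halves wt_def V_part_def V_component_def
        pair_halves_def fun_eq_iff F3vecs_def)
  have tgt: "{y \<in> PiE_dflt {..<m} (0, 0) (\<lambda>_. {0,1,2} \<times> {0,1,2}). ?P y}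
      = {y \<in> PiE_dflt {..<m} (0, 0) B. (\<Sum>j<m. wt (y j)) = w}"
    by (auto simp: PiE_dflt_def B_def)
  have "card {e \<in> sphere (2*m) w. V_part m a c e = v}
      = card {y \<in> PiE_dflt {..<m} (0, 0) B. (\<Sum>j<m. wt (y j)) = w}"
    using bij_betw_same_card[OF bij] unfolding src tgt .
  also have "\<dots> = coeff (\<Prod>j<m. \<Sum>xy\<in>B j. monom 1 (wt xy)) w"
    by (rule card_PiE_dflt_weight) (auto simp: B_def)
  also have "(\<Prod>j<m. \<Sum>xy\<in>B j. monom 1 (wt xy))
      = (\<Prod>j<m. if v j = 0 then block_enum_zero else block_enum_nonzero)"
  proof (rule prod.cong[OF refl])
    fix j assume "j \<in> {..<m}"
    then show "(\<Sum>xy\<in>B j. monom 1 (wt xy)) = (if v j = 0 then block_enum_zero else block_enum_nonzero)"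
      unfolding B_def wt_def using ac v by (intro block_weight_enum) (auto simp: F3vecs_def)
  qed
  finally show ?thesis
    by (simp add: prod_if_zero_eq_power_hweight V_fibre_size_def mult.commute)
qed

lemma binomial_monom_power:
  fixes x y :: "'a::comm_semiring_1"
  shows "(monom x d1 + monom y d2) ^ k
         = (\<Sum>p\<le>k. monom (of_nat (k choose p) * x ^ p * y ^ (k - p)) (d1 * p + d2 * (k - p)))"
  unfolding binomial_ring
  by (rule sum.cong) (simp_all add: monom_power mult_monom of_nat_monom ac_simps)

lemma V_fibre_size_eq_sum:
  "V_fibre_size m w k = (\<Sum>p\<le>k. if even (w + p) \<and> k \<le> (w + p) div 2
      then (k choose p) * 2 ^ p * ((m - k choose ((w + p) div 2 - k)) * 2 ^ ((w + p) div 2 - k)) else 0)"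
proof -
  have "V_fibre_size m w k = (\<Sum>p\<le>k. \<Sum>s\<le>m - k.
      if p + 2 * (k - p) + 2 * s = w then (k choose p) * 2 ^ p * ((m - k choose s) * 2 ^ s) else 0)"
    unfolding V_fibre_size_def block_enum_zero_def block_enum_nonzero_def binomial_monom_power sum_product
    by (simp add: coeff_sum mult_monom coeff_monom)
  also have "\<dots> = (\<Sum>p\<le>k. if even (w + p) \<and> k \<le> (w + p) div 2
      then (k choose p) * 2 ^ p * ((m - k choose ((w + p) div 2 - k)) * 2 ^ ((w + p) div 2 - k)) else 0)"
  proof (rule sum.cong[OF refl])
    fix p assume "p \<in> {..k}"
    then have "p \<le> k" by simp
    let ?h = "(w + p) div 2"
    let ?F = "\<lambda>s. (k choose p) * 2 ^ p * ((m - k choose s) * 2 ^ s)"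
    have cond: "p + 2 * (k - p) + 2 * s = w \<longleftrightarrow> even (w + p) \<and> k \<le> ?h \<and> s = ?h - k" for s
    proof
      assume "p + 2 * (k - p) + 2 * s = w"
      then have "w + p = 2 * (k + s)"
        using \<open>p \<le> k\<close> by arith
      then show "even (w + p) \<and> k \<le> ?h \<and> s = ?h - k" by simp
    next
      assume *: "even (w + p) \<and> k \<le> ?h \<and> s = ?h - k"
      then have "w + p = 2 * ?h" by simp
      then show "p + 2 * (k - p) + 2 * s = w"
        using * \<open>p \<le> k\<close> by arith
    qed
    have "(\<Sum>s\<le>m - k. if p + 2 * (k - p) + 2 * s = w then ?F s else 0)
        = (\<Sum>s\<le>m - k. if s = ?h - k then (if even (w + p) \<and> k \<le> ?h then ?F s else 0) else 0)"
      by (rule sum.cong[OF refl]) (simp add: cond)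
    also have "\<dots> = (if even (w + p) \<and> k \<le> ?h then ?F (?h - k) else 0)"
      by (simp add: sum.delta')
    finally show "(\<Sum>s\<le>m - k. if p + 2 * (k - p) + 2 * s = w then ?F s else 0)
        = (if even (w + p) \<and> k \<le> ?h then ?F (?h - k) else 0)" .
  qed
  finally show ?thesis .
qed

text \<open>Since there are \<open>binomial m k * 2\<^sup>k\<close> vectors \<open>v\<close> of weight \<open>k\<close>, this says that
  \<^term>\<open>q1 (2*m) w k\<close> is the probability that \<open>e\<^sub>V\<close> has weight \<open>k\<close>.\<close>

lemma q1_eq_V_fibre_size:
  assumes "k \<le> m"
  shows "q1 (2*m) w k = real (m choose k) * 2 ^ k * real (V_fibre_size m w k) / (real (2*m choose w) * 2 ^ w)"
proof -
  let ?h = "\<lambda>p. (w + p) div 2"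
  let ?T = "\<lambda>p. real (k choose p) * (if k \<le> ?h p then real ((m - k) choose (?h p - k)) else 0)
                * 2 powr (3 * real p / 2)"
  let ?G = "\<lambda>p. if even (w + p) \<and> k \<le> ?h p
      then (k choose p) * 2 ^ p * ((m - k choose (?h p - k)) * 2 ^ (?h p - k)) else 0"
  have summand: "(if even (w + p) then ?T p else 0) = 2 powr (real w / 2) / 2 ^ w * 2 ^ k * ?G p" for p
  proof (cases "even (w + p) \<and> k \<le> ?h p")
    case True
    then obtain q where "w + p = 2 * q"
      by (meson evenE)
    then have "3 * real p / 2 = real w / 2 + (real (p + ?h p) - real w)"
      by simp
    then have "(2::real) powr (3 * real p / 2) = 2 powr (real w / 2) * 2 powr (real (p + ?h p) - real w)"
      by (simp only: powr_add)
    also have "2 powr (real (p + ?h p) - real w) = (2::real) ^ (p + ?h p) / 2 ^ w"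
      by (simp add: powr_diff powr_realpow del: of_nat_add)
    also have "(2::real) ^ (p + ?h p) = 2 ^ k * (2 ^ p * 2 ^ (?h p - k))"
      using True by (simp flip: power_add)
    finally show ?thesis
      using True by simp
  qed auto
  have "(2*m) div 2 = m"
    by simp
  then have "q1 (2*m) w k = (m choose k) / ((2*m choose w) * 2 powr (real w / 2))
      * (\<Sum>p\<in>{p. p \<le> k \<and> even (w + p)}. ?T p)"
    unfolding q1_def by (simp only:)
  also have "(\<Sum>p\<in>{p. p \<le> k \<and> even (w + p)}. ?T p) = (\<Sum>p\<le>k. if even (w + p) then ?T p else 0)"
    by (simp add: sum.inter_filter[symmetric] atMost_def conj_commute)
  also have "\<dots> = (\<Sum>p\<le>k. 2 powr (real w / 2) / 2 ^ w * 2 ^ k * ?G p)"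
    by (rule sum.cong[OF refl]) (rule summand)
  also have "\<dots> = 2 powr (real w / 2) / 2 ^ w * 2 ^ k * V_fibre_size m w k"
    by (simp only: V_fibre_size_eq_sum of_nat_sum sum_distrib_left)
  finally show ?thesis
    by simp
qed

lemma card_V_collisions:
  assumes "w \<le> 2*m" and ac: "\<forall>j<m. a j \<in> {1,2} \<and> c j \<in> {1,2}"
  shows "real (card (V_collisions m a c w)) / (real (card (sphere (2*m) w)))\<^sup>2
         = (\<Sum>j=0..m. (q1 (2*m) w j)\<^sup>2 / (2 ^ j * real (m choose j)))"
proof -
  let ?S = "sphere (2*m) w" and ?V = "V_part m a c"
  have "card (V_collisions m a c w) = (\<Sum>v\<in>F3vecs m. card {e \<in> ?S. ?V e = v} ^ 2)"
    unfolding V_collisions_eq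
    by (rule card_pairs_same_image) (auto simp: finite_sphere finite_F3vecs V_part_in_F3vecs)
  also have "\<dots> = (\<Sum>v\<in>F3vecs m. V_fibre_size m w (hweight m v) ^ 2)"
    using ac by (simp add: card_V_fibre)
  also have "\<dots> = (\<Sum>k\<le>m. (m choose k) * 2 ^ k * V_fibre_size m w k ^ 2)"
    using sum_ternary_PiE_dflt_by_weight[of "{..<m}" "\<lambda>k. V_fibre_size m w k ^ 2"]
    by (simp add: F3vecs_eq_PiE_dflt hweight_eq_sum)
  finally have "real (card (V_collisions m a c w)) / (real (card ?S))\<^sup>2
      = (\<Sum>k\<le>m. (m choose k) * 2 ^ k * V_fibre_size m w k ^ 2 / (real (card ?S))\<^sup>2)"
    by (simp add: sum_divide_distrib)
  also have "\<dots> = (\<Sum>k\<le>m. (q1 (2*m) w k)\<^sup>2 / (2 ^ k * real (m choose k)))"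
  proof (rule sum.cong[OF refl])
    fix k assume "k \<in> {..m}"
    then have "real (m choose k) > 0" "real (2*m choose w) > 0"
      using \<open>w \<le> 2*m\<close> by simp_all
    then show "(m choose k) * 2 ^ k * V_fibre_size m w k ^ 2 / (real (card ?S))\<^sup>2
        = (q1 (2*m) w k)\<^sup>2 / (2 ^ k * real (m choose k))"
      unfolding q1_eq_V_fibre_size[of k m w, OF \<open>k \<in> {..m}\<close>[simplified]] card_sphere
      by (simp add: field_simps power2_eq_square)
  qed
  finally show ?thesis
    by (simp add: atLeast0AtMost)
qed

section \<open>Pairs with equal \<open>e\<^sub>U\<close>\<close>

lemma sphere_agreeing_eq_PiE_dflt:
  assumes I: "I \<subseteq> {..<n}" and uI: "\<And>i. i \<in> I \<Longrightarrow> u i \<in> {0,1,2}"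
  shows "{e \<in> sphere n w. \<forall>i\<in>I. e i = u i}
         = {e \<in> PiE_dflt {..<n} 0 (\<lambda>i. if i \<in> I then {u i} else {0,1,2}).
              (\<Sum>i<n. of_bool (e i \<noteq> 0)) = w}"
proof -
  let ?B = "\<lambda>i. if i \<in> I then {u i} else {0,1,2::int}"
  have "e \<in> PiE_dflt {..<n} 0 ?B
      \<longleftrightarrow> e \<in> PiE_dflt {..<n} 0 (\<lambda>_. {0,1,2}) \<and> (\<forall>i\<in>I. e i = u i)" for e
  proof
    assume e: "e \<in> PiE_dflt {..<n} 0 ?B"
    then have "e i = u i" if "i \<in> I" for i
      using that I by (force simp: PiE_dflt_def)
    moreover have "e i \<in> {0,1,2}" if "i < n" for i
    proof -
      have "e i \<in> ?B i"
        using e that by (simp add: PiE_dflt_def)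
      then show ?thesis
        using uI by (auto split: if_splits)
    qed
    ultimately show "e \<in> PiE_dflt {..<n} 0 (\<lambda>_. {0,1,2}) \<and> (\<forall>i\<in>I. e i = u i)"
      using e by (auto simp: PiE_dflt_def)
  qed (auto simp: PiE_dflt_def)
  then show ?thesis
    by (auto simp: sphere_eq_PiE_dflt)
qed

lemma card_sphere_agreeing:
  assumes I: "I \<subseteq> {..<n}" and u: "u \<in> PiE_dflt I 0 (\<lambda>_. {0,1,2})"
  defines "k \<equiv> (\<Sum>i\<in>I. of_bool (u i \<noteq> 0) :: nat)"
  shows "card {e \<in> sphere n w. \<forall>i\<in>I. e i = u i}
         = (if k \<le> w then ((n - card I) choose (w - k)) * 2 ^ (w - k) else 0)"
proof -
  let ?B = "\<lambda>i. if i \<in> I then {u i} else {0,1,2::int}"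
  have fin: "finite I"
    using I finite_subset by blast
  have uI: "u i \<in> {0,1,2}" if "i \<in> I" for i
    using u that by (auto simp: PiE_dflt_def)
  have "card {e \<in> sphere n w. \<forall>i\<in>I. e i = u i}
      = card {e \<in> PiE_dflt {..<n} 0 ?B. (\<Sum>i<n. of_bool (e i \<noteq> 0)) = w}"
    using sphere_agreeing_eq_PiE_dflt[OF I uI] by simp
  also have "\<dots> = coeff (\<Prod>i<n. \<Sum>y\<in>?B i. monom (1::nat) (of_bool (y \<noteq> 0))) w"
    by (rule card_PiE_dflt_weight) auto
  also have "(\<Prod>i<n. \<Sum>y\<in>?B i. monom (1::nat) (of_bool (y \<noteq> 0)))
      = (\<Prod>i<n. if i \<in> I then monom 1 (of_bool (u i \<noteq> 0)) else [:1, 2:])"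
  proof (rule prod.cong[OF refl])
    fix i
    show "(\<Sum>y\<in>?B i. monom (1::nat) (of_bool (y \<noteq> 0)))
        = (if i \<in> I then monom 1 (of_bool (u i \<noteq> 0)) else [:1, 2:])"
      by (cases "i \<in> I") (simp, simp only: if_False ternary_weight_enum)
  qed
  also have "\<dots> = (\<Prod>i\<in>{..<n} \<inter> {i. i \<in> I}. monom 1 (of_bool (u i \<noteq> 0)))
      * (\<Prod>i\<in>{..<n} \<inter> - {i. i \<in> I}. [:1, 2:])"
    by (rule prod.If_cases) simp
  also have "\<dots> = monom 1 k * [:1, 2:] ^ (n - card I)"
  proof -
    have "{..<n} \<inter> {i. i \<in> I} = I" "{..<n} \<inter> - {i. i \<in> I} = {..<n} - I"
      using I by auto
    moreover have "(\<Prod>i\<in>I. monom (1::nat) (of_bool (u i \<noteq> 0))) = monom 1 k"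
      unfolding k_def by (rule prod_monom_1[OF fin])
    ultimately show ?thesis
      using I fin by (simp add: card_Diff_subset)
  qed
  finally show ?thesis
    unfolding coeff_monom_mult coeff_ternary_weight_enum_power by (auto simp: not_less)
qed

lemma card_sphere_pairs_agreeing:
  assumes "I \<subseteq> {..<n}"
  shows "card {p \<in> sphere n w \<times> sphere n w. \<forall>i\<in>I. fst p i = snd p i}
         = (\<Sum>k\<le>card I. (card I choose k) * 2 ^ k
              * (if k \<le> w then ((n - card I) choose (w - k)) * 2 ^ (w - k) else 0)\<^sup>2)"
proof -
  let ?S = "sphere n w" and ?V = "PiE_dflt I 0 (\<lambda>_. {0,1,2::int})"
  let ?r = "\<lambda>e i. if i \<in> I then e i else 0"
  have fin: "finite I"
    using assms finite_subset by blast
  have "{p \<in> ?S \<times> ?S. \<forall>i\<in>I. fst p i = snd p i} = {p \<in> ?S \<times> ?S. ?r (fst p) = ?r (snd p)}"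
    by (auto simp: fun_eq_iff)
  also have "card \<dots> = (\<Sum>u\<in>?V. card {e \<in> ?S. ?r e = u} ^ 2)"
  proof (rule card_pairs_same_image[OF finite_sphere])
    show "finite ?V"
      using fin by (intro finite_PiE_dflt) auto
    show "?r ` ?S \<subseteq> ?V"
      using assms by (auto simp: sphere_def F3vecs_def PiE_dflt_def)
  qed
  also have "\<dots> = (\<Sum>u\<in>?V. (\<lambda>k. (if k \<le> w then ((n - card I) choose (w - k)) * 2 ^ (w - k) else 0)\<^sup>2)
                           (\<Sum>i\<in>I. of_bool (u i \<noteq> 0)))"
  proof (rule sum.cong[OF refl])
    fix u assume u: "u \<in> ?V"
    then have "{e \<in> ?S. ?r e = u} = {e \<in> ?S. \<forall>i\<in>I. e i = u i}"
      by (auto simp: fun_eq_iff PiE_dflt_def)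
    then show "card {e \<in> ?S. ?r e = u} ^ 2
        = (\<lambda>k. (if k \<le> w then ((n - card I) choose (w - k)) * 2 ^ (w - k) else 0)\<^sup>2)
            (\<Sum>i\<in>I. of_bool (u i \<noteq> 0))"
      using card_sphere_agreeing[OF assms u, of w] by simp
  qed
  also have "\<dots> = (\<Sum>k\<le>card I. (card I choose k) * 2 ^ k
              * (if k \<le> w then ((n - card I) choose (w - k)) * 2 ^ (w - k) else 0)\<^sup>2)"
    using sum_ternary_PiE_dflt_by_weight[OF fin,
        where f="\<lambda>k. (if k \<le> w then ((n - card I) choose (w - k)) * 2 ^ (w - k) else 0)\<^sup>2"]
    by simp
  finally show ?thesis .
qed

definition typeI_coords :: "nat \<Rightarrow> (nat \<Rightarrow> int) \<Rightarrow> (nat \<Rightarrow> int) \<Rightarrow> nat set" where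
  "typeI_coords m b d = (\<lambda>j. if b j = 0 then j else m + j) ` {j. j < m \<and> (b j * d j) mod 3 = 0}"

lemma typeI_coords_subset: "typeI_coords m b d \<subseteq> {..<2*m}"
  by (auto simp: typeI_coords_def)

lemma card_typeI_coords: "card (typeI_coords m b d) = nI m b d"
proof -
  have "inj_on (\<lambda>j. if b j = 0 then j else m + j) {j. j < m \<and> (b j * d j) mod 3 = 0}"
    by (auto simp: inj_on_def split: if_splits)
  then show ?thesis
    unfolding typeI_coords_def by (subst card_image) (simp_all add: nI_def)
qed

text \<open>On a block of type I one of \<open>b\<^sub>j, d\<^sub>j\<close> vanishes and the other one is a unit,
  so \<open>e\<^sub>U\<close> determines \<open>e\<^sub>j\<close> (if \<open>b\<^sub>j = 0\<close>) or \<open>e\<^sub>m\<^sub>+\<^sub>j\<close> (if \<open>d\<^sub>j = 0\<close>).\<close>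

lemma dvd_at_typeI_coord:
  assumes rng: "b j \<in> {0,1,2}" "d j \<in> {0,1,2}" and det: "(a j * d j - b j * c j) mod 3 = 1"
    and typeI: "(b j * d j) mod 3 = 0" and U: "3 dvd U_component m b d z j"
  shows "3 dvd z (if b j = 0 then j else m + j)"
proof (cases "b j = 0")
  case True
  then have "\<not> 3 dvd d j"
    using det by (auto simp: dvd_eq_mod_eq_0 mod_mult_right_eq[of _ "d j", symmetric])
  moreover have "U_component m b d z j = d j * z j"
    using True by (simp add: U_component_def)
  ultimately show ?thesis
    using U True dvd_mult_cancel_3 by metis
next
  case False
  then have "d j = 0" "\<not> 3 dvd b j"
    using rng typeI by auto
  moreover have "U_component m b d z j = - (b j * z (m + j))"
    using \<open>d j = 0\<close> by (simp add: U_component_def)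
  ultimately show ?thesis
    using U False dvd_mult_cancel_3 dvd_minus_iff by metis
qed

lemma U_collisions_subset_agreeing:
  assumes rng: "\<forall>j<m. b j \<in> {0,1,2} \<and> d j \<in> {0,1,2}"
    and det: "\<forall>j<m. (a j * d j - b j * c j) mod 3 = 1"
  shows "U_collisions m b d w
         \<subseteq> {p \<in> sphere (2*m) w \<times> sphere (2*m) w. \<forall>i\<in>typeI_coords m b d. fst p i = snd p i}"
proof (intro subsetI)
  fix p assume U: "p \<in> U_collisions m b d w"
  then have S: "fst p \<in> sphere (2*m) w" "snd p \<in> sphere (2*m) w"
    by (auto simp: U_collisions_def)
  have "fst p i = snd p i" if "i \<in> typeI_coords m b d" for i
  proof -
    obtain j where j: "j < m" "(b j * d j) mod 3 = 0" and i: "i = (if b j = 0 then j else m + j)"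
      using \<open>i \<in> typeI_coords m b d\<close> by (auto simp: typeI_coords_def)
    then have "3 dvd (fst p - snd p) i"
      unfolding i using U rng det
      by (intro dvd_at_typeI_coord[where a=a and c=c and m=m and z="fst p - snd p"])
        (auto simp: U_collisions_def)
    moreover have "i < 2*m"
      using i j by simp
    ultimately show ?thesis
      using S by (intro F3_eq_if_dvd_diff) (auto simp: sphere_def F3vecs_def)
  qed
  then show "p \<in> {p \<in> sphere (2*m) w \<times> sphere (2*m) w. \<forall>i\<in>typeI_coords m b d. fst p i = snd p i}"
    using S by (simp add: mem_Times_iff)
qed

lemma card_sphere_pairs_agreeing_ratio:
  assumes "I \<subseteq> {..<n}" "w \<le> n"
  shows "real (card {p \<in> sphere n w \<times> sphere n w. \<forall>i\<in>I. fst p i = snd p i}) / (real (card (sphere n w)))\<^sup>2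
         = (\<Sum>k\<le>card I. real (card I choose k)
              * (if k \<le> w then real ((n - card I) choose (w - k)) else 0)\<^sup>2 / (real (n choose w) ^ 2 * 2 ^ k))"
proof -
  let ?c = "card I"
  have "real (card {p \<in> sphere n w \<times> sphere n w. \<forall>i\<in>I. fst p i = snd p i})
      = (\<Sum>k\<le>?c. real (?c choose k) * 2 ^ k * (if k \<le> w then real ((n - ?c) choose (w - k)) * 2 ^ (w - k) else 0)\<^sup>2)"
    unfolding card_sphere_pairs_agreeing[OF assms(1)] by (auto simp: of_nat_sum intro!: sum.cong)
  moreover have "real (?c choose k) * 2 ^ k * (if k \<le> w then real ((n - ?c) choose (w - k)) * 2 ^ (w - k) else 0)\<^sup>2
        / (real (card (sphere n w)))\<^sup>2
      = real (?c choose k) * (if k \<le> w then real ((n - ?c) choose (w - k)) else 0)\<^sup>2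
        / (real (n choose w) ^ 2 * 2 ^ k)"
    for k
  proof -
    have "real (n choose w) > 0"
      using \<open>w \<le> n\<close> by simp
    moreover have "(2::real) ^ w = 2 ^ k * 2 ^ (w - k)" if "k \<le> w"
      using that by (simp flip: power_add)
    ultimately show ?thesis
      by (cases "k \<le> w") (simp_all add: card_sphere field_simps power2_eq_square)
  qed
  ultimately show ?thesis
    by (simp add: sum_divide_distrib)
qed

lemma card_U_collisions_le:
  assumes "w \<le> 2*m"
    and rng: "\<forall>j<m. b j \<in> {0,1,2} \<and> d j \<in> {0,1,2}"
    and det: "\<forall>j<m. (a j * d j - b j * c j) mod 3 = 1"
  shows "real (card (U_collisions m b d w)) / (real (card (sphere (2*m) w)))\<^sup>2
         \<le> (\<Sum>j=0..nI m b d. real (nI m b d choose j)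
               * (if j \<le> w then real ((2*m - nI m b d) choose (w - j)) else 0)\<^sup>2
               / (real (2*m choose w) ^ 2 * 2 ^ j))"
proof -
  let ?S = "sphere (2*m) w"
  have "card (U_collisions m b d w) \<le> card {p \<in> ?S \<times> ?S. \<forall>i\<in>typeI_coords m b d. fst p i = snd p i}"
    using U_collisions_subset_agreeing[OF rng det, of w] by (intro card_mono) (auto simp: finite_sphere)
  then have "real (card (U_collisions m b d w)) / (real (card ?S))\<^sup>2
      \<le> real (card {p \<in> ?S \<times> ?S. \<forall>i\<in>typeI_coords m b d. fst p i = snd p i}) / (real (card ?S))\<^sup>2"
    by (intro divide_right_mono) simp_all
  also have "\<dots> = (\<Sum>j\<le>nI m b d. real (nI m b d choose j)
      * (if j \<le> w then real ((2*m - nI m b d) choose (w - j)) else 0)\<^sup>2 / (real (2*m choose w) ^ 2 * 2 ^ j))"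
    using card_sphere_pairs_agreeing_ratio[OF typeI_coords_subset \<open>w \<le> 2*m\<close>, of b d]
    unfolding card_typeI_coords .
  finally show ?thesis
    by (simp add: atLeast0AtMost)
qed

section \<open>Averaging over the key\<close>

lemma card_F3invertible_pos: "card (F3invertible r) > 0"
proof -
  have "finite (F3invertible r)"
    by (rule finite_subset[OF _ finite_F3mats]) (auto simp: F3invertible_def)
  then show ?thesis
    using idmat_in_F3invertible card_gt_0_iff by blast
qed

lemma dist_to_unif_Hpk:
  assumes "S \<in> F3invertible ((m - kU) + (m - kV))" and "\<pi> permutes {..<2*m}"
  shows "dist_to_unif ((m - kU) + (m - kV)) (2*m) w (Hpk m kU kV a b c d HU HV S \<pi>)
       = dist_to_unif ((m - kU) + (m - kV)) (2*m) w (Hsk m kU kV a b c d HU HV)"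
  using assms by (simp add: Hpk_def Let_def dist_to_unif_mmul_invertible dist_to_unif_mmul_perm_mat)

lemma average_collision_excess_Hsk_le_eps:
  fixes m kU kV w :: nat and a b c d :: "nat \<Rightarrow> int"
  assumes "kU \<le> m" "kV \<le> m" "w \<le> 2*m"
    and rng: "\<forall>i<m. a i \<in> {0,1,2} \<and> b i \<in> {0,1,2} \<and> c i \<in> {0,1,2} \<and> d i \<in> {0,1,2}"
    and det: "\<forall>i<m. (a i * d i - b i * c i) mod 3 = 1"
    and ac: "\<forall>i<m. (a i * c i) mod 3 \<noteq> 0"
  shows "(\<Sum>HU\<in>F3mats (m - kU) m. \<Sum>HV\<in>F3mats (m - kV) m.
            collision_excess ((m - kU) + (m - kV)) (2*m) w (Hsk m kU kV a b c d HU HV))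
         / (real (card (F3mats (m - kU) m)) * real (card (F3mats (m - kV) m)))
       \<le> eps (2*m) kU kV w (nI m b d)"
proof -
  let ?N = "real (card (sphere (2*m) w))"
  have units: "\<forall>j<m. a j \<in> {1,2} \<and> c j \<in> {1,2}"
    using rng ac by fastforce
  have "3 ^ (m - kV) * real (card (V_collisions m a c w)) / ?N\<^sup>2
      = 3 ^ (m - kV) * (\<Sum>j=0..m. (q1 (2*m) w j)\<^sup>2 / (2 ^ j * real (m choose j)))"
    unfolding times_divide_eq_right[symmetric] card_V_collisions[OF \<open>w \<le> 2*m\<close> units] ..
  moreover have "3 ^ (m - kU) * real (card (U_collisions m b d w)) / ?N\<^sup>2
      \<le> 3 ^ (m - kU) * (\<Sum>j=0..nI m b d. real (nI m b d choose j)
          * (if j \<le> w then real ((2*m - nI m b d) choose (w - j)) else 0)\<^sup>2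
          / (real (2*m choose w) ^ 2 * 2 ^ j))"
    using card_U_collisions_le[OF \<open>w \<le> 2*m\<close> _ det] rng
    by (simp add: mult.assoc divide_inverse mult_left_mono)
  moreover have "3 ^ ((m - kU) + (m - kV)) / ?N = 3 ^ (2*m - (kU + kV)) / (2 ^ w * real (2*m choose w))"
  proof -
    have "(m - kU) + (m - kV) = 2*m - (kU + kV)"
      using assms(1,2) by simp
    then show ?thesis
      by (simp add: card_sphere mult.commute)
  qed
  ultimately show ?thesis
    using average_collision_excess_Hsk_le[OF \<open>kU \<le> m\<close> \<open>w \<le> 2*m\<close> det, of kV]
    unfolding eps_def by simp
qed

lemma average_dist_to_unif_Hsk_le:
  fixes m kU kV w :: nat and a b c d :: "nat \<Rightarrow> int"
  assumes "kU \<le> m" "kV \<le> m" "w \<le> 2*m"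
    and "\<forall>i<m. a i \<in> {0,1,2} \<and> b i \<in> {0,1,2} \<and> c i \<in> {0,1,2} \<and> d i \<in> {0,1,2}"
    and "\<forall>i<m. (a i * d i - b i * c i) mod 3 = 1"
    and "\<forall>i<m. (a i * c i) mod 3 \<noteq> 0"
  shows "(\<Sum>HU\<in>F3mats (m - kU) m. \<Sum>HV\<in>F3mats (m - kV) m.
            dist_to_unif ((m - kU) + (m - kV)) (2*m) w (Hsk m kU kV a b c d HU HV))
         / (real (card (F3mats (m - kU) m)) * real (card (F3mats (m - kV) m)))
       \<le> 1/2 * sqrt (eps (2*m) kU kV w (nI m b d))"
proof -
  let ?M = "F3mats (m - kU) m \<times> F3mats (m - kV) m"
  let ?E = "\<lambda>q. collision_excess ((m - kU) + (m - kV)) (2*m) w (Hsk m kU kV a b c d (fst q) (snd q))"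
  have "(\<Sum>HU\<in>F3mats (m - kU) m. \<Sum>HV\<in>F3mats (m - kV) m.
            dist_to_unif ((m - kU) + (m - kV)) (2*m) w (Hsk m kU kV a b c d HU HV))
      \<le> (\<Sum>q\<in>?M. 1/2 * sqrt (?E q))"
    unfolding sum.cartesian_product
    by (intro sum_mono, unfold case_prod_beta) (rule dist_to_unif_le_collision_excess[OF \<open>w \<le> 2*m\<close>])
  then have "(\<Sum>HU\<in>F3mats (m - kU) m. \<Sum>HV\<in>F3mats (m - kV) m.
            dist_to_unif ((m - kU) + (m - kV)) (2*m) w (Hsk m kU kV a b c d HU HV)) / card ?M
      \<le> 1/2 * ((\<Sum>q\<in>?M. sqrt (?E q)) / card ?M)"
    by (simp add: divide_right_mono sum_distrib_left)
  also have "\<dots> \<le> 1/2 * sqrt ((\<Sum>q\<in>?M. ?E q) / card ?M)"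
    using average_sqrt_le_sqrt_average[of ?M ?E] collision_excess_nonneg \<open>w \<le> 2*m\<close>
    by (simp add: finite_F3mats)
  also have "\<dots> \<le> 1/2 * sqrt (eps (2*m) kU kV w (nI m b d))"
    using average_collision_excess_Hsk_le_eps[OF assms]
    by (simp add: sum.cartesian_product card_cartesian_product case_prod_beta)
  finally show ?thesis
    by (simp add: card_cartesian_product)
qed

lemma average_dist_to_unif_Hpk:
  "(\<Sum>HU\<in>F3mats (m - kU) m. \<Sum>HV\<in>F3mats (m - kV) m.
      \<Sum>S\<in>F3invertible ((m - kU) + (m - kV)). \<Sum>\<pi>\<in>{\<pi>. \<pi> permutes {..<2*m}}.
        dist_to_unif ((m - kU) + (m - kV)) (2*m) w (Hpk m kU kV a b c d HU HV S \<pi>))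
   / (real (card (F3mats (m - kU) m)) * real (card (F3mats (m - kV) m))
      * real (card (F3invertible ((m - kU) + (m - kV)))) * real (card {\<pi>. \<pi> permutes {..<2*m}}))
   = (\<Sum>HU\<in>F3mats (m - kU) m. \<Sum>HV\<in>F3mats (m - kV) m.
        dist_to_unif ((m - kU) + (m - kV)) (2*m) w (Hsk m kU kV a b c d HU HV))
     / (real (card (F3mats (m - kU) m)) * real (card (F3mats (m - kV) m)))"
proof -
  let ?SI = "F3invertible ((m - kU) + (m - kV))" and ?PI = "{\<pi>. \<pi> permutes {..<2*m}}"
  let ?c = "real (card ?SI) * real (card ?PI)"
  have pos: "card ?SI > 0" "card ?PI > 0"
    using card_F3invertible_pos card_permutations[OF refl, of "{..<2*m}"] by simp_all
  have "(\<Sum>S\<in>?SI. \<Sum>\<pi>\<in>?PI. dist_to_unif ((m - kU) + (m - kV)) (2*m) w (Hpk m kU kV a b c d HU HV S \<pi>))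
      = ?c * dist_to_unif ((m - kU) + (m - kV)) (2*m) w (Hsk m kU kV a b c d HU HV)" for HU HV
    by (simp add: dist_to_unif_Hpk)
  then show ?thesis
    using pos by (simp add: sum_distrib_left[symmetric] mult.commute mult.left_commute)
qed

theorem proposition7:
  fixes n kU kV w :: nat and a b c d :: "nat \<Rightarrow> int"
  assumes "even n"
    and "kU \<le> n div 2" and "kV \<le> n div 2"
    and "w \<le> n"
    and "\<forall>i < n div 2. a i \<in> {0,1,2} \<and> b i \<in> {0,1,2} \<and> c i \<in> {0,1,2} \<and> d i \<in> {0,1,2}"
    and "\<forall>i < n div 2. (a i * d i - b i * c i) mod 3 = 1"
    and "\<forall>i < n div 2. (a i * c i) mod 3 \<noteq> 0"
  shows "(\<Sum>HU \<in> F3mats (n div 2 - kU) (n div 2). \<Sum>HV \<in> F3mats (n div 2 - kV) (n div 2).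
          \<Sum>S \<in> F3invertible (n - (kU + kV)). \<Sum>\<pi> \<in> {\<pi>. \<pi> permutes {..<n}}.
            dist_to_unif (n - (kU + kV)) n w (Hpk (n div 2) kU kV a b c d HU HV S \<pi>))
         / (real (card (F3mats (n div 2 - kU) (n div 2))) * real (card (F3mats (n div 2 - kV) (n div 2)))
            * real (card (F3invertible (n - (kU + kV)))) * real (card {\<pi>. \<pi> permutes {..<n}}))
       \<le> 1/2 * sqrt (eps n kU kV w (nI (n div 2) b d))"
proof -
  obtain m where n: "n = 2 * m"
    using \<open>even n\<close> by blast
  have r: "2 * m - (kU + kV) = (m - kU) + (m - kV)"
    using assms(2,3) n by simp
  have "(\<Sum>HU\<in>F3mats (m - kU) m. \<Sum>HV\<in>F3mats (m - kV) m.
          \<Sum>S\<in>F3invertible ((m - kU) + (m - kV)). \<Sum>\<pi>\<in>{\<pi>. \<pi> permutes {..<2*m}}.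
            dist_to_unif ((m - kU) + (m - kV)) (2*m) w (Hpk m kU kV a b c d HU HV S \<pi>))
        / (real (card (F3mats (m - kU) m)) * real (card (F3mats (m - kV) m))
           * real (card (F3invertible ((m - kU) + (m - kV)))) * real (card {\<pi>. \<pi> permutes {..<2*m}}))
      \<le> 1/2 * sqrt (eps (2*m) kU kV w (nI m b d))"
    unfolding average_dist_to_unif_Hpk
    using assms by (intro average_dist_to_unif_Hsk_le) (simp_all add: n)
  then show ?thesis
    unfolding n r by simp
qed

end
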